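(* Let $k\ge 1$ and $n_1,\dots,n_k\in\mathbb{Z}$. The group \[ G=\left\langle a,t,b_1,\dots,b_k \;\middle|\; at=ta,\; b_1^{-1}tb_1=a^{n_1}t,\;\dots,\; b_k^{-1}tb_k=a^{n_k}t\right\rangle \] is asynchronously automatic.
   Context: Paths $w,u$ in a Cayley graph (parametrized by arc length, eventually constant) asynchronously $K$-fellow travel if there is a non-decreasing proper continuous function $\phi:[0,\infty)\to[0,\infty)$ with $d(w(s),u(\phi(s)))\le K$ for all $s\ge 0$ (so every point of $w$ is within $K$ of some point of $u$ and vice versa). A group $G$ with finite generating set $A$ is asynchronously automatic if there is a regular language $L$ over $A\cup A^{-1}$ whose evaluation map $L\to G$ is surjective and finite-to-one (no element of $G$ has infinitely many preimages), and a constant $K$ such that whenever $w,u\in L$ and $\overline{u}=\overline{wx}$ for some $x\in A\cup A^{-1}\cup\{1\}$, the paths of $w$ and $u$ in the Cayley graph asynchronously $K$-fellow travel. Such groups are called linearly mismatched free-by-cyclic groups in the paper. *)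

theory Defs
  imports "HOL-Analysis.Analysis"
begin

datatype gen = Ga | Gt | Gb nat

text \<open>A letter is a generator together with an inversion flag (True = inverse letter).\<close>
type_synonym letter = "gen \<times> bool"

definition gens :: "nat \<Rightarrow> gen set" where
  "gens k = {Ga, Gt} \<union> {Gb i | i. 1 \<le> i \<and> i \<le> k}"

definition alphabet :: "nat \<Rightarrow> letter set" where
  "alphabet k = {(g, e). g \<in> gens k}"

definition inv_letter :: "letter \<Rightarrow> letter" where
  "inv_letter x = (fst x, \<not> snd x)"

definition inv_word :: "letter list \<Rightarrow> letter list" where
  "inv_word w = rev (map inv_letter w)"

definition gpow :: "gen \<Rightarrow> int \<Rightarrow> letter list" where
  "gpow g n = (if 0 \<le> n then replicate (nat n) (g, False) else replicate (nat (- n)) (g, True))"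

definition relators :: "nat \<Rightarrow> (nat \<Rightarrow> int) \<Rightarrow> letter list set" where
  "relators k ns =
     {[(Ga, False), (Gt, False), (Ga, True), (Gt, True)]} \<union>
     {[(Gb i, True), (Gt, False), (Gb i, False), (Gt, True)] @ gpow Ga (- ns i) | i. 1 \<le> i \<and> i \<le> k}"

inductive eqG :: "nat \<Rightarrow> (nat \<Rightarrow> int) \<Rightarrow> letter list \<Rightarrow> letter list \<Rightarrow> bool"
  for k :: nat and ns :: "nat \<Rightarrow> int" where
  refl: "eqG k ns u u"
| sym: "eqG k ns u v \<Longrightarrow> eqG k ns v u"
| trans: "eqG k ns u v \<Longrightarrow> eqG k ns v w \<Longrightarrow> eqG k ns u w"
| cong: "eqG k ns u v \<Longrightarrow> eqG k ns (p @ u @ q) (p @ v @ q)"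
| cancel: "eqG k ns [x, inv_letter x] []"
| rel: "r \<in> relators k ns \<Longrightarrow> eqG k ns r []"

definition dword :: "nat \<Rightarrow> (nat \<Rightarrow> int) \<Rightarrow> letter list \<Rightarrow> letter list \<Rightarrow> real" where
  "dword k ns u v = real (LEAST n. \<exists>z \<in> lists (alphabet k). length z = n \<and> eqG k ns (u @ z) v)"

text \<open>A point of the Cayley graph: (h, a, \<theta>) is the point at distance \<theta> \<in> [0,1] from the
  vertex h along the edge from h to h a (a a generator).\<close>
type_synonym cpoint = "letter list \<times> gen \<times> real"

text \<open>Path metric of the Cayley graph (every edge isometric to [0,1]).\<close>
definition cdist :: "nat \<Rightarrow> (nat \<Rightarrow> int) \<Rightarrow> cpoint \<Rightarrow> cpoint \<Rightarrow> real" where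
  "cdist k ns P Q =
    (case P of (h, a, \<theta>) \<Rightarrow> case Q of (h', a', \<eta>) \<Rightarrow>
      (let ha = h @ [(a, False)]; ha' = h' @ [(a', False)];
           d4 = min (min (\<theta> + dword k ns h h' + \<eta>) (\<theta> + dword k ns h ha' + (1 - \<eta>)))
                    (min ((1 - \<theta>) + dword k ns ha h' + \<eta>) ((1 - \<theta>) + dword k ns ha ha' + (1 - \<eta>)))
       in if eqG k ns h h' \<and> a = a' then min \<bar>\<theta> - \<eta>\<bar> d4 else d4))"

definition wpath :: "letter list \<Rightarrow> real \<Rightarrow> cpoint" where
  "wpath w s =
    (if real (length w) \<le> s then (w, Ga, 0)
     else (let i = nat \<lfloor>s\<rfloor>; \<theta> = s - real i; x = w ! i; p = take i w in
           if snd x then (p @ [x], fst x, 1 - \<theta>) else (p, fst x, \<theta>)))"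

definition async_fellow_travel ::
    "nat \<Rightarrow> (nat \<Rightarrow> int) \<Rightarrow> real \<Rightarrow> letter list \<Rightarrow> letter list \<Rightarrow> bool" where
  "async_fellow_travel k ns K w u \<longleftrightarrow>
     (\<exists>\<phi> :: real \<Rightarrow> real.
        \<phi> ` {0..} \<subseteq> {0..} \<and> mono_on {0..} \<phi> \<and> continuous_on {0..} \<phi> \<and>
        proper_map (top_of_set {0..}) (top_of_set {0..}) \<phi> \<and>
        (\<forall>s \<ge> 0. cdist k ns (wpath w s) (wpath u (\<phi> s)) \<le> K))"

definition regular_lang :: "'a set \<Rightarrow> 'a list set \<Rightarrow> bool" where
  "regular_lang S L \<longleftrightarrow> L \<subseteq> lists S \<and>
     (\<exists>(Q :: nat set) q0 (\<delta> :: nat \<Rightarrow> 'a \<Rightarrow> nat) F.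
        finite Q \<and> q0 \<in> Q \<and> F \<subseteq> Q \<and> (\<forall>q\<in>Q. \<forall>x\<in>S. \<delta> q x \<in> Q) \<and>
        L = {w \<in> lists S. foldl \<delta> q0 w \<in> F})"

definition async_automatic :: "nat \<Rightarrow> (nat \<Rightarrow> int) \<Rightarrow> bool" where
  "async_automatic k ns \<longleftrightarrow>
     (\<exists>L K. regular_lang (alphabet k) L \<and>
        (\<forall>v \<in> lists (alphabet k). \<exists>w \<in> L. eqG k ns w v) \<and>
        (\<forall>v \<in> lists (alphabet k). finite {w \<in> L. eqG k ns w v}) \<and>
        (\<forall>w \<in> L. \<forall>u \<in> L. \<forall>x \<in> alphabet k.
            (eqG k ns u (w @ [x]) \<longrightarrow> async_fellow_travel k ns K w u) \<and>
            (eqG k ns u w \<longrightarrow> async_fellow_travel k ns K w u)))"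

end

theory Submission
  imports Defs
begin

text \<open>The group is the semidirect product of the free group on a, b_1, ..., b_k with the infinite
  cyclic group generated by t, where conjugation by t fixes a and sends b_i to b_i a^{n_i}.
  Hence every element has a unique normal form t^m a^{c_0} s_1 a^{c_1} ... s_r a^{c_r} with
  s_j \<in> {b_i, b_i^{-1}} and no cancellation, and these words form a regular language.
  Right multiplication by a or b_i changes a normal form only at its end. Right multiplication
  by t or t^{-1} moves the t-letter to the front and twists the normal form: every exponent c_j
  changes by a bounded amount. Matching the syllables of the two normal forms one by one, and
  the a-powers inside corresponding syllables letter by letter as far as possible, gives a
  monotone correspondence between the two words along which corresponding prefixes stay
  uniformly close; interpolating it linearly yields the reparametrization required for
  asynchronous fellow travelling.\<close>

type_synonym syllable = "letter \<times> int"

text \<open>A state (m, c_0, [(s_1, c_1), ..., (s_r, c_r)]) stands for t^m a^{c_0} s_1 a^{c_1} ... s_r a^{c_r};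
  nf_step computes the state of the product with one more letter on the right.\<close>
type_synonym nf_state = "int \<times> int \<times> syllable list"

fun b_exponent :: "(nat \<Rightarrow> int) \<Rightarrow> letter \<Rightarrow> int" where
  "b_exponent ns (Gb i, e) = ns i" | "b_exponent ns (Ga, e) = 0" | "b_exponent ns (Gt, e) = 0"

text \<open>The map W \<mapsto> t^d W t^{-d} (d = 1 or d = -1) inserts a^{post_exp} after every letter b_i and
  a^{pre_exp} before every letter b_i^{-1}; the latter is absorbed into the preceding a-exponent,
  which is what carry computes (e is the amount carried into the last exponent).\<close>
definition post_exp :: "(nat \<Rightarrow> int) \<Rightarrow> int \<Rightarrow> letter \<Rightarrow> int" where
  "post_exp ns d s = (if snd s then 0 else d * b_exponent ns s)"
definition pre_exp :: "(nat \<Rightarrow> int) \<Rightarrow> int \<Rightarrow> letter \<Rightarrow> int" where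
  "pre_exp ns d s = (if snd s then - (d * b_exponent ns s) else 0)"
definition carry :: "(nat \<Rightarrow> int) \<Rightarrow> int \<Rightarrow> int \<Rightarrow> syllable list \<Rightarrow> int" where
  "carry ns d e r = (case r of [] \<Rightarrow> e | x # _ \<Rightarrow> pre_exp ns d (fst x))"

fun twist_syls :: "(nat \<Rightarrow> int) \<Rightarrow> int \<Rightarrow> int \<Rightarrow> syllable list \<Rightarrow> syllable list" where
  "twist_syls ns d e [] = []"
| "twist_syls ns d e (x # r) = (fst x, snd x + post_exp ns d (fst x) + carry ns d e r) # twist_syls ns d e r"

definition twist :: "(nat \<Rightarrow> int) \<Rightarrow> int \<Rightarrow> int \<times> syllable list \<Rightarrow> int \<times> syllable list" where
  "twist ns d p = (fst p + carry ns d 0 (snd p), twist_syls ns d 0 (snd p))"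

definition add_last_exp :: "int \<Rightarrow> syllable list \<Rightarrow> syllable list" where
  "add_last_exp x r = butlast r @ [(fst (last r), snd (last r) + x)]"

definition append_a_pow :: "int \<Rightarrow> int \<times> syllable list \<Rightarrow> int \<times> syllable list" where
  "append_a_pow x p = (if snd p = [] then (fst p + x, []) else (fst p, add_last_exp x (snd p)))"

definition append_b :: "letter \<Rightarrow> int \<times> syllable list \<Rightarrow> int \<times> syllable list" where
  "append_b s p = (if snd p \<noteq> [] \<and> last (snd p) = (inv_letter s, 0) then (fst p, butlast (snd p))
                else (fst p, snd p @ [(s, 0)]))"

fun nf_step :: "(nat \<Rightarrow> int) \<Rightarrow> nf_state \<Rightarrow> letter \<Rightarrow> nf_state" where
  "nf_step ns (m, p) (Gt, e) = (if e then (m - 1, twist ns 1 p) else (m + 1, twist ns (-1) p))"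
| "nf_step ns (m, p) (Ga, e) = (m, append_a_pow (if e then -1 else 1) p)"
| "nf_step ns (m, p) (Gb i, e) = (m, append_b (Gb i, e) p)"

definition nf_run :: "(nat \<Rightarrow> int) \<Rightarrow> nf_state \<Rightarrow> letter list \<Rightarrow> nf_state" where
  "nf_run ns s w = foldl (nf_step ns) s w"

fun is_b_letter :: "letter \<Rightarrow> bool" where
  "is_b_letter (Gb i, e) = True" | "is_b_letter (Ga, e) = False" | "is_b_letter (Gt, e) = False"

fun freely_reduced :: "syllable list \<Rightarrow> bool" where
  "freely_reduced (x # y # r) = ((fst y = inv_letter (fst x) \<longrightarrow> snd x \<noteq> 0) \<and> freely_reduced (y # r))"
| "freely_reduced _ = True"

definition reduced :: "int \<times> syllable list \<Rightarrow> bool" where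
  "reduced p \<longleftrightarrow> (\<forall>x \<in> set (snd p). is_b_letter (fst x)) \<and> freely_reduced (snd p)"

lemma inv_letter_inv_letter[simp]: "inv_letter (inv_letter x) = x"
  by (simp add: inv_letter_def)
lemma fst_inv_letter[simp]: "fst (inv_letter x) = fst x" and snd_inv_letter[simp]: "snd (inv_letter x) = (\<not> snd x)"
  by (simp_all add: inv_letter_def)
lemma inv_letter_eq_iff[simp]: "inv_letter x = inv_letter y \<longleftrightarrow> x = y"
  by (metis inv_letter_inv_letter)
lemma b_exponent_inv[simp]: "b_exponent ns (inv_letter x) = b_exponent ns x"
  by (cases x; cases "fst x") (auto simp: inv_letter_def)
lemma is_b_letter_inv[simp]: "is_b_letter (inv_letter x) = is_b_letter x"
  by (cases x; cases "fst x") (auto simp: inv_letter_def)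

lemma post_exp_add: "post_exp ns (d + d') s = post_exp ns d s + post_exp ns d' s"
  by (simp add: post_exp_def algebra_simps)
lemma pre_exp_add: "pre_exp ns (d + d') s = pre_exp ns d s + pre_exp ns d' s"
  by (simp add: pre_exp_def algebra_simps)
lemma carry_add: "carry ns (d + d') (e + e') r = carry ns d e r + carry ns d' e' r"
  by (cases r) (auto simp: carry_def pre_exp_add)
lemma post_exp_0[simp]: "post_exp ns 0 s = 0" and pre_exp_0[simp]: "pre_exp ns 0 s = 0"
  by (simp_all add: post_exp_def pre_exp_def)
lemma carry_0[simp]: "carry ns 0 0 r = 0"
  by (cases r) (auto simp: carry_def)
lemma post_exp_pre_exp_inv: "post_exp ns d s + pre_exp ns d (inv_letter s) = 0"
  by (simp add: post_exp_def pre_exp_def)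

lemma map_fst_twist_syls[simp]: "map fst (twist_syls ns d e r) = map fst r"
  by (induction r) auto
lemma twist_syls_Nil_iff[simp]: "twist_syls ns d e r = [] \<longleftrightarrow> r = []"
  by (cases r) auto
lemma length_twist_syls[simp]: "length (twist_syls ns d e r) = length r"
  by (induction r) auto
lemma carry_twist_syls[simp]: "carry ns d e (twist_syls ns d' e' r) = carry ns d e r"
  by (cases r) (auto simp: carry_def)

lemma twist_syls_twist_syls: "twist_syls ns d e (twist_syls ns d' e' r) = twist_syls ns (d + d') (e + e') r"
  by (induction r) (auto simp: post_exp_add carry_add)
lemma twist_syls_0[simp]: "twist_syls ns 0 0 r = r"
  by (induction r) auto

lemma twist_twist: "twist ns d (twist ns d' p) = twist ns (d + d') p"
  by (simp add: twist_def twist_syls_twist_syls carry_add[of ns d d' 0 0, simplified])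
lemma twist_0[simp]: "twist ns 0 p = p"
  by (simp add: twist_def)

lemma freely_reduced_twist_syls: "freely_reduced r \<Longrightarrow> freely_reduced (twist_syls ns d e r)"
proof (induction r rule: freely_reduced.induct)
  case (1 x y r)
  then show ?case
    using post_exp_pre_exp_inv[of ns d "fst x"] by (auto simp: carry_def)
qed auto

lemma is_b_letter_twist_syls: "(\<forall>x\<in>set r. is_b_letter (fst x)) \<Longrightarrow> \<forall>x\<in>set (twist_syls ns d e r). is_b_letter (fst x)"
  by (induction r) auto

lemma reduced_twist: "reduced p \<Longrightarrow> reduced (twist ns d p)"
  unfolding reduced_def twist_def using is_b_letter_twist_syls[of "snd p" ns d 0] freely_reduced_twist_syls[of "snd p" ns d 0] by simp

lemma freely_reduced_snoc: "freely_reduced (r @ [y]) \<longleftrightarrow> freely_reduced r \<and> (r \<noteq> [] \<longrightarrow> fst y = inv_letter (fst (last r)) \<longrightarrow> snd (last r) \<noteq> 0)"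
  by (induction r rule: freely_reduced.induct) auto

lemma freely_reduced_butlast: "freely_reduced r \<Longrightarrow> freely_reduced (butlast r)"
  by (metis append_butlast_last_id freely_reduced_snoc butlast.simps(1))

lemma freely_reduced_add_last_exp: "r \<noteq> [] \<Longrightarrow> freely_reduced r \<Longrightarrow> freely_reduced (add_last_exp x r)"
  unfolding add_last_exp_def
  by (metis append_butlast_last_id freely_reduced_snoc fst_conv)

lemma add_last_exp_ne[simp]: "add_last_exp x r \<noteq> []" by (simp add: add_last_exp_def)

lemma is_b_letter_add_last_exp: "(\<forall>x\<in>set r. is_b_letter (fst x)) \<Longrightarrow> r \<noteq> [] \<Longrightarrow> \<forall>x\<in>set (add_last_exp c r). is_b_letter (fst x)"
  unfolding add_last_exp_def by (auto dest: in_set_butlastD)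

lemma reduced_append_a_pow: "reduced p \<Longrightarrow> reduced (append_a_pow x p)"
  unfolding reduced_def append_a_pow_def using is_b_letter_add_last_exp[of "snd p" x] freely_reduced_add_last_exp[of "snd p" x] by simp

lemma reduced_append_b: "reduced p \<Longrightarrow> is_b_letter s \<Longrightarrow> reduced (append_b s p)"
  unfolding reduced_def append_b_def
  by (auto simp: freely_reduced_butlast freely_reduced_snoc in_set_butlastD)
     (metis inv_letter_inv_letter prod.collapse)

lemma reduced_nf_step: "reduced (snd s) \<Longrightarrow> reduced (snd (nf_step ns s x))"
  by (cases s; cases x; cases "fst x") (auto simp: reduced_twist reduced_append_a_pow reduced_append_b)

lemma reduced_nf_run: "reduced (snd s) \<Longrightarrow> reduced (snd (nf_run ns s w))"
  unfolding nf_run_def by (induction w arbitrary: s) (auto simp: reduced_nf_step)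

lemma nf_run_append[simp]: "nf_run ns s (u @ v) = nf_run ns (nf_run ns s u) v"
  by (simp add: nf_run_def)
lemma nf_run_Nil[simp]: "nf_run ns s [] = s" by (simp add: nf_run_def)
lemma nf_run_Cons[simp]: "nf_run ns s (x # v) = nf_run ns (nf_step ns s x) v" by (simp add: nf_run_def)

lemma add_last_exp_add_last_exp: "r \<noteq> [] \<Longrightarrow> add_last_exp x (add_last_exp y r) = add_last_exp (y + x) r"
  by (simp add: add_last_exp_def algebra_simps)
lemma add_last_exp_0[simp]: "r \<noteq> [] \<Longrightarrow> add_last_exp 0 r = r"
  by (simp add: add_last_exp_def)
lemma append_a_pow_append_a_pow: "append_a_pow x (append_a_pow y p) = append_a_pow (y + x) p"
  by (auto simp: append_a_pow_def add_last_exp_add_last_exp algebra_simps)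
lemma append_a_pow_0[simp]: "append_a_pow 0 p = p"
  by (cases p) (auto simp: append_a_pow_def)

lemma append_b_app: "\<not> (r \<noteq> [] \<and> last r = (inv_letter s, 0)) \<Longrightarrow> append_b s (c, r) = (c, r @ [(s, 0)])"
  unfolding append_b_def fst_conv snd_conv by (rule if_not_P)

lemma append_b_inv: "reduced p \<Longrightarrow> is_b_letter s \<Longrightarrow> append_b (inv_letter s) (append_b s p) = p"
proof -
  assume v: "reduced p" and s: "is_b_letter s"
  obtain c r where p: "p = (c, r)" by (cases p)
  show ?thesis
  proof (cases "r \<noteq> [] \<and> last r = (inv_letter s, 0)")
    case True
    then obtain r0 where r: "r = r0 @ [(inv_letter s, 0)]" by (metis append_butlast_last_id)
    from v have "freely_reduced r" by (simp add: reduced_def p)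
    then have "r0 \<noteq> [] \<longrightarrow> fst (last r0) = s \<longrightarrow> snd (last r0) \<noteq> 0" unfolding r freely_reduced_snoc
      by auto
    then have n: "\<not> (r0 \<noteq> [] \<and> last r0 = (inv_letter (inv_letter s), 0))" by auto
    have 1: "append_b s (c, r) = (c, r0)" by (simp add: append_b_def r)
    have 2: "append_b (inv_letter s) (c, r0) = (c, r0 @ [(inv_letter s, 0)])"
      using n unfolding append_b_def by auto
    show ?thesis using 1 2 by (simp add: p r)
  next
    case False
    have 1: "append_b s (c, r) = (c, r @ [(s, 0)])" using False unfolding append_b_def by auto
    have 2: "append_b (inv_letter s) (c, r @ [(s, 0)]) = (c, r)" by (simp add: append_b_def)
    show ?thesis using 1 2 by (simp add: p)
  qed
qed

lemma nf_step_inv: "reduced (snd q) \<Longrightarrow> nf_step ns (nf_step ns q x) (inv_letter x) = q"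
proof -
  assume v: "reduced (snd q)"
  obtain m p where q: "q = (m, p)" by (cases q)
  obtain g e where x: "x = (g, e)" by (cases x)
  show ?thesis
  proof (cases g)
    case Ga then show ?thesis by (simp add: q x inv_letter_def append_a_pow_append_a_pow)
  next
    case Gt then show ?thesis by (simp add: q x inv_letter_def twist_twist)
  next
    case (Gb i)
    have iv: "inv_letter (Gb i, e) = (Gb i, \<not> e)" by (simp add: inv_letter_def)
    have "append_b (Gb i, \<not> e) (append_b (Gb i, e) p) = p"
      using append_b_inv[of p "(Gb i, e)"] v unfolding iv q by simp
    then show ?thesis unfolding q x Gb iv by simp
  qed
qed

lemma nf_run_replicate_a: "nf_run ns (m, p) (replicate n (Ga, e)) = (m, append_a_pow ((if e then -1 else 1) * int n) p)"
proof (induction n arbitrary: p)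
  case (Suc n) then show ?case by (simp add: append_a_pow_append_a_pow algebra_simps)
qed simp

lemma nf_run_gpow_a: "nf_run ns (m, p) (gpow Ga c) = (m, append_a_pow c p)"
  by (cases "0 \<le> c") (simp_all add: gpow_def nf_run_replicate_a)

lemma carry_Nil[simp]: "carry ns d e [] = e" by (simp add: carry_def)

lemma carry_add_last_exp[simp]: "carry ns d e (add_last_exp x r) = (if r = [] then pre_exp ns d (fst (last r)) else carry ns d e r)"
  by (cases r) (auto simp: carry_def add_last_exp_def)

lemma twist_syls_add_last_exp: "r \<noteq> [] \<Longrightarrow> twist_syls ns d e (add_last_exp x r) = add_last_exp x (twist_syls ns d e r)"
proof (induction r)
  case (Cons y r)
  show ?case
  proof (cases "r = []")
    case True then show ?thesis by (simp add: add_last_exp_def carry_def)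
  next
    case False
    have "add_last_exp x (y # r) = y # add_last_exp x r" using False by (simp add: add_last_exp_def)
    moreover have "add_last_exp x (twist_syls ns d e (y # r)) = (fst y, snd y + post_exp ns d (fst y) + carry ns d e r) # add_last_exp x (twist_syls ns d e r)"
      using False by (simp add: add_last_exp_def)
    ultimately show ?thesis using Cons False by simp
  qed
qed simp

lemma twist_append_a_pow: "twist ns d (append_a_pow x p) = append_a_pow x (twist ns d p)"
  by (cases "snd p = []") (auto simp: twist_def append_a_pow_def twist_syls_add_last_exp)

lemma twist_syls_append: "twist_syls ns d e (A @ B) = twist_syls ns d (carry ns d e B) A @ twist_syls ns d e B"
proof (induction A)
  case (Cons x A)
  have "carry ns d e (A @ B) = carry ns d (carry ns d e B) A" by (cases A) (auto simp: carry_def)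
  then show ?case using Cons by simp
qed simp

lemma twist_syls_zero: "twist_syls ns 0 e r = (if r = [] then [] else add_last_exp e r)"
proof (induction r)
  case (Cons y r)
  then show ?case by (cases r) (auto simp: add_last_exp_def carry_def)
qed simp

lemma last_twist_syls: "r \<noteq> [] \<Longrightarrow> last (twist_syls ns d e r) = (fst (last r), snd (last r) + post_exp ns d (fst (last r)) + e)"
proof (induction r)
  case (Cons y r) then show ?case by (cases r) (auto simp: carry_def)
qed simp

lemma post_exp_Gb: "post_exp ns d (Gb i, e) = (if e then 0 else d * ns i)"
  by (simp add: post_exp_def)
lemma pre_exp_Gb: "pre_exp ns d (Gb i, e) = (if e then - (d * ns i) else 0)"
  by (simp add: pre_exp_def)

lemma nf_run_b_conj_t_cancel:
  assumes fr: "freely_reduced (r0 @ [((Gb i, False), 0)])"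
  shows "nf_run ns (m, c, r0 @ [((Gb i, False), 0)]) [(Gb i, True), (Gt, False), (Gb i, False), (Gt, True)]
    = (m, append_a_pow (ns i) (c, r0 @ [((Gb i, False), 0)]))"
proof -
  let ?sm = "(Gb i, True)" and ?b = "(Gb i, False)"
  have nz: "r0 \<noteq> [] \<longrightarrow> fst (last r0) = ?sm \<longrightarrow> snd (last r0) \<noteq> 0"
    using fr by (simp add: freely_reduced_snoc inv_letter_def)
  have 1: "append_b ?sm (c, r0 @ [(?b, 0)]) = (c, r0)" by (simp add: append_b_def inv_letter_def)
  have nl: "\<not> (twist_syls ns (-1) 0 r0 \<noteq> [] \<and> last (twist_syls ns (-1) 0 r0) = (?sm, 0))"
  proof
    assume a: "twist_syls ns (-1) 0 r0 \<noteq> [] \<and> last (twist_syls ns (-1) 0 r0) = (?sm, 0)"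
    then have "r0 \<noteq> []" by simp
    with a have "fst (last r0) = ?sm" "snd (last r0) = 0"
      using last_twist_syls[of r0 ns "-1" 0] by (auto simp: post_exp_def)
    with nz \<open>r0 \<noteq> []\<close> show False by simp
  qed
  have 2: "append_b ?b (twist ns (-1) (c, r0)) = (c + carry ns (-1) 0 r0, twist_syls ns (-1) 0 r0 @ [(?b, 0)])"
    using nl unfolding append_b_def twist_def by (auto simp: inv_letter_def)
  have h: "c + carry ns (-1) 0 r0 + carry ns 1 0 (twist_syls ns (-1) 0 r0 @ [(?b, 0)]) = c"
    by (cases r0) (auto simp: carry_def pre_exp_def)
  have t: "twist_syls ns 1 0 (twist_syls ns (-1) 0 r0 @ [(?b, 0)]) = r0 @ [(?b, ns i)]"
    by (simp add: twist_syls_append carry_def pre_exp_Gb post_exp_Gb twist_syls_twist_syls)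
  have 3: "twist ns 1 (c + carry ns (-1) 0 r0, twist_syls ns (-1) 0 r0 @ [(?b, 0)]) = (c, r0 @ [(?b, ns i)])"
    using h t by (simp add: twist_def)
  show ?thesis using 1 2 3 by (simp add: append_a_pow_def add_last_exp_def)
qed

lemma nf_run_b_conj_t_no_cancel:
  assumes nc: "\<not> (r \<noteq> [] \<and> last r = ((Gb i, False), 0))"
  shows "nf_run ns (m, c, r) [(Gb i, True), (Gt, False), (Gb i, False), (Gt, True)] = (m, append_a_pow (ns i) (c, r))"
proof -
  let ?sm = "(Gb i, True)" and ?b = "(Gb i, False)"
  let ?c' = "c + carry ns (-1) 0 (r @ [(?sm, 0)])"
  have 1: "append_b ?sm (c, r) = (c, r @ [(?sm, 0)])" using nc by (auto simp: append_b_def inv_letter_def)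
  have 2: "twist ns (-1) (c, r @ [(?sm, 0)]) = (?c', twist_syls ns (-1) (ns i) r @ [(?sm, 0)])"
    by (simp add: twist_def twist_syls_append carry_def pre_exp_Gb post_exp_Gb)
  have 3: "append_b ?b (?c', twist_syls ns (-1) (ns i) r @ [(?sm, 0)]) = (?c', twist_syls ns (-1) (ns i) r)"
    by (simp add: append_b_def inv_letter_def)
  have 4: "twist ns 1 (?c', twist_syls ns (-1) (ns i) r) = append_a_pow (ns i) (c, r)"
  proof (cases "r = []")
    case True then show ?thesis by (simp add: twist_def append_a_pow_def carry_def pre_exp_Gb)
  next
    case False
    have "twist_syls ns 1 0 (twist_syls ns (-1) (ns i) r) = add_last_exp (ns i) r"
      using False by (simp add: twist_syls_twist_syls twist_syls_zero)
    moreover have "carry ns (-1) 0 (r @ [(?sm, 0)]) + carry ns 1 0 (twist_syls ns (-1) (ns i) r) = 0"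
      using False by (cases r) (auto simp: carry_def pre_exp_def)
    ultimately show ?thesis using False by (simp add: twist_def append_a_pow_def)
  qed
  show ?thesis using 1 2 3 4 by simp
qed

lemma nf_run_b_relator:
  assumes "reduced p"
  shows "nf_run ns (m, p) ([(Gb i, True), (Gt, False), (Gb i, False), (Gt, True)] @ gpow Ga (- ns i)) = (m, p)"
proof -
  obtain c r where p: "p = (c, r)" by (cases p)
  have "nf_run ns (m, p) [(Gb i, True), (Gt, False), (Gb i, False), (Gt, True)] = (m, append_a_pow (ns i) p)"
  proof (cases "r \<noteq> [] \<and> last r = ((Gb i, False), 0)")
    case True
    then obtain r0 where r: "r = r0 @ [((Gb i, False), 0)]" by (metis append_butlast_last_id)
    show ?thesis using nf_run_b_conj_t_cancel assms by (simp add: p r reduced_def)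
  next
    case False
    then show ?thesis using nf_run_b_conj_t_no_cancel by (simp add: p)
  qed
  then show ?thesis by (simp add: nf_run_gpow_a append_a_pow_append_a_pow)
qed

lemma nf_run_comm_relator: "nf_run ns (m, p) [(Ga, False), (Gt, False), (Ga, True), (Gt, True)] = (m, p)"
  by (simp add: twist_append_a_pow twist_twist append_a_pow_append_a_pow)

lemma nf_run_eqG:
  assumes "eqG k ns u v" "reduced (snd s)"
  shows "nf_run ns s u = nf_run ns s v"
  using assms
proof (induction arbitrary: s rule: eqG.induct)
  case (cong u v p q)
  have "reduced (snd (nf_run ns s p))" using cong.prems by (rule reduced_nf_run)
  then show ?case using cong.IH by simp
next
  case (cancel x)
  then show ?case by (simp add: nf_step_inv)
next
  case (rel r)
  obtain m p where s: "s = (m, p)" by (cases s)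
  from rel.hyps consider "r = [(Ga, False), (Gt, False), (Ga, True), (Gt, True)]"
    | i where "r = [(Gb i, True), (Gt, False), (Gb i, False), (Gt, True)] @ gpow Ga (- ns i)"
    unfolding relators_def by blast
  then show ?case
  proof cases
    case 1 then show ?thesis using nf_run_comm_relator[of ns m p] by (simp add: s)
  next
    case (2 i) then show ?thesis using nf_run_b_relator[of p ns m i] rel.prems by (simp add: s)
  qed
qed auto

definition syls_word :: "int \<times> syllable list \<Rightarrow> letter list" where
  "syls_word p = gpow Ga (fst p) @ concat (map (\<lambda>x. fst x # gpow Ga (snd x)) (snd p))"

definition nf_word :: "nf_state \<Rightarrow> letter list" where
  "nf_word s = gpow Gt (fst s) @ syls_word (snd s)"

lemma syls_word_Nil[simp]: "syls_word (c, []) = gpow Ga c" by (simp add: syls_word_def)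
lemma syls_word_snoc: "syls_word (c, r @ [y]) = syls_word (c, r) @ fst y # gpow Ga (snd y)"
  by (simp add: syls_word_def)
lemma syls_word_Cons: "syls_word (c0, y # r) = gpow Ga c0 @ fst y # syls_word (snd y, r)"
  by (simp add: syls_word_def)

declare eqG.trans[trans] eqG.refl[simp, intro]

lemma eqG_append: "eqG k ns u u' \<Longrightarrow> eqG k ns v v' \<Longrightarrow> eqG k ns (u @ v) (u' @ v')"
proof -
  assume 1: "eqG k ns u u'" and 2: "eqG k ns v v'"
  have "eqG k ns ([] @ u @ v) ([] @ u' @ v)" by (rule eqG.cong[OF 1])
  also have "eqG k ns ([] @ u' @ v) (u' @ v' @ [])" using eqG.cong[OF 2, of u' "[]"] by simp
  finally show ?thesis by simp
qed

lemma eqG_cancel_inv: "eqG k ns [inv_letter x, x] []" using eqG.cancel[of k ns "inv_letter x"] by simp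

lemma eqG_insert_cancel_pair: "eqG k ns (p @ q) (p @ [x, inv_letter x] @ q)"
  using eqG.cong[OF eqG.cancel[of k ns x], where p=p and q=q] by (simp add: eqG.sym)
lemma eqG_insert_cancel_pair_inv: "eqG k ns (p @ q) (p @ [inv_letter x, x] @ q)"
  using eqG.cong[OF eqG_cancel_inv[of k ns x], where p=p and q=q] by (simp add: eqG.sym)
lemma eqG_delete_cancel_pair: "eqG k ns (p @ [x, inv_letter x] @ q) (p @ q)"
  using eqG.cong[OF eqG.cancel[of k ns x], where p=p and q=q] by simp
lemma eqG_delete_cancel_pair_inv: "eqG k ns (p @ [inv_letter x, x] @ q) (p @ q)"
  using eqG.cong[OF eqG_cancel_inv[of k ns x], where p=p and q=q] by simp

lemma inv_word_Cons: "inv_word (x # u) = inv_word u @ [inv_letter x]"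
  by (simp add: inv_word_def)
lemma inv_word_Nil[simp]: "inv_word [] = []" by (simp add: inv_word_def)
lemma inv_word_inv[simp]: "inv_word (inv_word u) = u"
  by (simp add: inv_word_def rev_map comp_def)
lemma eqG_append_inv_word: "eqG k ns (u @ inv_word u) []"
proof (induction u)
  case (Cons x u)
  have "eqG k ns ([x] @ (u @ inv_word u) @ [inv_letter x]) ([x] @ [] @ [inv_letter x])"
    by (rule eqG.cong[OF Cons])
  then have "eqG k ns ((x # u) @ inv_word (x # u)) [x, inv_letter x]"
    by (simp add: inv_word_Cons)
  also have "eqG k ns [x, inv_letter x] []" by (rule eqG.cancel)
  finally show ?case .
qed simp

lemma eqG_inv_word_append: "eqG k ns (inv_word u @ u) []"
  using eqG_append_inv_word[of k ns "inv_word u"] by simp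

lemma eqG_if_append_inv_word: "eqG k ns (u @ inv_word v) [] \<Longrightarrow> eqG k ns u v"
proof -
  assume h: "eqG k ns (u @ inv_word v) []"
  have "eqG k ns (u @ [] @ []) (u @ (inv_word v @ v) @ [])"
    using eqG.cong[OF eqG_inv_word_append[of k ns v], where p=u and q="[]"] by (simp add: eqG.sym)
  also have "eqG k ns (u @ (inv_word v @ v) @ []) ([] @ (u @ inv_word v) @ v)" by simp
  also have "eqG k ns ([] @ (u @ inv_word v) @ v) ([] @ [] @ v)" by (rule eqG.cong[OF h])
  finally show ?thesis by simp
qed

abbreviation "aF \<equiv> (Ga, False)"
abbreviation "aT \<equiv> (Ga, True)"
abbreviation "tF \<equiv> (Gt, False)"
abbreviation "tT \<equiv> (Gt, True)"

lemma inv_letter_simps[simp]: "inv_letter aF = aT" "inv_letter aT = aF" "inv_letter tF = tT" "inv_letter tT = tF"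
  "inv_letter (Gb i, e) = (Gb i, \<not> e)"
  by (simp_all add: inv_letter_def)

lemma eqG_aF_tF: "eqG k ns [aF, tF] [tF, aF]"
  by (rule eqG_if_append_inv_word) (auto simp: inv_word_def relators_def intro: eqG.rel)

lemma eqG_commute_inv_left:
  assumes "eqG k ns [x, y] [y, x]"
  shows "eqG k ns [inv_letter x, y] [y, inv_letter x]"
proof -
  have "eqG k ns ([inv_letter x, y] @ []) ([inv_letter x, y] @ [x, inv_letter x] @ [])"
    by (rule eqG_insert_cancel_pair)
  also have "\<dots> = [inv_letter x] @ [y, x] @ [inv_letter x]" by simp
  also have "eqG k ns \<dots> ([inv_letter x] @ [x, y] @ [inv_letter x])" by (rule eqG.cong[OF eqG.sym[OF assms]])
  also have "\<dots> = [] @ [inv_letter x, x] @ [y, inv_letter x]" by simp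
  also have "eqG k ns \<dots> ([] @ [y, inv_letter x])" by (rule eqG_delete_cancel_pair_inv)
  finally show ?thesis by simp
qed

lemma eqG_commute_inv_right:
  assumes "eqG k ns [x, y] [y, x]"
  shows "eqG k ns [x, inv_letter y] [inv_letter y, x]"
proof -
  have "eqG k ns ([] @ [x, inv_letter y]) ([] @ [inv_letter y, y] @ [x, inv_letter y])"
    by (rule eqG_insert_cancel_pair_inv)
  also have "\<dots> = [inv_letter y] @ [y, x] @ [inv_letter y]" by simp
  also have "eqG k ns \<dots> ([inv_letter y] @ [x, y] @ [inv_letter y])" by (rule eqG.cong[OF eqG.sym[OF assms]])
  also have "\<dots> = [inv_letter y, x] @ [y, inv_letter y] @ []" by simp
  also have "eqG k ns \<dots> ([inv_letter y, x] @ [])" by (rule eqG_delete_cancel_pair)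
  finally show ?thesis by simp
qed

lemma eqG_aT_tF: "eqG k ns [aT, tF] [tF, aT]"
  using eqG_commute_inv_left[OF eqG_aF_tF] by simp
lemma eqG_aF_tT: "eqG k ns [aF, tT] [tT, aF]"
  using eqG_commute_inv_right[OF eqG_aF_tF] by simp
lemma eqG_aT_tT: "eqG k ns [aT, tT] [tT, aT]"
  using eqG_commute_inv_left[OF eqG_aF_tT] by simp

lemma eqG_replicate_commute: "eqG k ns [x, y] [y, x] \<Longrightarrow> eqG k ns (replicate n x @ [y]) (y # replicate n x)"
proof (induction n)
  case (Suc n)
  have "eqG k ns ([x] @ (replicate n x @ [y]) @ []) ([x] @ (y # replicate n x) @ [])"
    by (rule eqG.cong[OF Suc.IH[OF Suc.prems]])
  also have "eqG k ns ([x] @ (y # replicate n x) @ []) ([] @ [x, y] @ replicate n x)" by simp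
  also have "eqG k ns ([] @ [x, y] @ replicate n x) ([] @ [y, x] @ replicate n x)" by (rule eqG.cong[OF Suc.prems])
  finally show ?case by simp
qed simp

lemma eqG_gpow_a_tF: "eqG k ns (gpow Ga c @ [tF]) (tF # gpow Ga c)"
  by (simp add: gpow_def eqG_replicate_commute eqG_aF_tF eqG_aT_tF)
lemma eqG_gpow_a_tT: "eqG k ns (gpow Ga c @ [tT]) (tT # gpow Ga c)"
  by (simp add: gpow_def eqG_replicate_commute eqG_aF_tT eqG_aT_tT)

lemma gpow_0[simp]: "gpow g 0 = []" by (simp add: gpow_def)
lemma gpow_snoc_pos: "0 \<le> y \<Longrightarrow> gpow g (y + 1) = gpow g y @ [(g, False)]"
  by (simp add: gpow_def nat_add_distrib replicate_append_same)
lemma gpow_snoc_neg: "y \<le> 0 \<Longrightarrow> gpow g (y - 1) = gpow g y @ [(g, True)]"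
proof -
  assume "y \<le> 0"
  then have "nat (- (y - 1)) = Suc (nat (- y))" by simp
  then show ?thesis using \<open>y \<le> 0\<close> by (auto simp: gpow_def replicate_append_same)
qed

lemma inv_word_gpow: "inv_word (gpow g c) = gpow g (- c)"
  by (auto simp: gpow_def inv_word_def inv_letter_def)

lemma eqG_gpow_snoc_pos: "eqG k ns (gpow g x @ [(g, False)]) (gpow g (x + 1))"
proof (cases "0 \<le> x")
  case True then show ?thesis by (simp add: gpow_snoc_pos)
next
  case False
  then have "gpow g x = gpow g (x + 1) @ [(g, True)]" using gpow_snoc_neg[of "x+1" g] by simp
  then have "gpow g x @ [(g, False)] = gpow g (x + 1) @ [inv_letter (g, False), (g, False)] @ []"
    by (simp add: inv_letter_def)
  also have "eqG k ns \<dots> (gpow g (x + 1) @ [])" by (rule eqG_delete_cancel_pair_inv)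
  finally show ?thesis by simp
qed

lemma eqG_gpow_snoc_neg: "eqG k ns (gpow g x @ [(g, True)]) (gpow g (x - 1))"
proof (cases "x \<le> 0")
  case True then show ?thesis by (simp add: gpow_snoc_neg)
next
  case False
  then have "gpow g x = gpow g (x - 1) @ [(g, False)]" using gpow_snoc_pos[of "x-1" g] by simp
  then have "gpow g x @ [(g, True)] = gpow g (x - 1) @ [(g, False), inv_letter (g, False)] @ []"
    by (simp add: inv_letter_def)
  also have "eqG k ns \<dots> (gpow g (x - 1) @ [])" by (rule eqG_delete_cancel_pair)
  finally show ?thesis by simp
qed

lemma eqG_gpow_add: "eqG k ns (gpow g x @ gpow g y) (gpow g (x + y))"
proof (induction y rule: int_induct[where k = 0])
  case base then show ?case by simp
next
  case (step1 y)
  have "gpow g x @ gpow g (y + 1) = (gpow g x @ gpow g y) @ [(g, False)]" using step1 by (simp add: gpow_snoc_pos)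
  also have "eqG k ns \<dots> (gpow g (x + y) @ [(g, False)])" using eqG_append[OF step1(2) eqG.refl] by simp
  also have "eqG k ns \<dots> (gpow g (x + y + 1))" by (rule eqG_gpow_snoc_pos)
  finally show ?case by (simp add: algebra_simps)
next
  case (step2 y)
  have "gpow g x @ gpow g (y - 1) = (gpow g x @ gpow g y) @ [(g, True)]" using step2 by (simp add: gpow_snoc_neg)
  also have "eqG k ns \<dots> (gpow g (x + y) @ [(g, True)])" using eqG_append[OF step2(2) eqG.refl] by simp
  also have "eqG k ns \<dots> (gpow g (x + y - 1))" by (rule eqG_gpow_snoc_neg)
  finally show ?case by (simp add: algebra_simps)
qed

lemma eqG_b_relator: "1 \<le> i \<Longrightarrow> i \<le> k \<Longrightarrow> eqG k ns ([(Gb i, True), tF, (Gb i, False), tT] @ gpow Ga (- ns i)) []"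
  by (rule eqG.rel) (auto simp: relators_def)

lemma eqG_b_tF:
  assumes i: "1 \<le> i" "i \<le> k"
  shows "eqG k ns [(Gb i, False), tF] (tF # (Gb i, False) # gpow Ga (- ns i))"
proof -
  let ?b = "(Gb i, False)" and ?bm = "(Gb i, True)" and ?A = "gpow Ga (- ns i)"
  have "eqG k ns ([?b] @ ([?bm, tF, ?b, tT] @ ?A) @ [?bm]) ([?b] @ [] @ [?bm])"
    by (rule eqG.cong[OF eqG_b_relator[OF i]])
  also have "eqG k ns ([?b] @ [] @ [?bm]) []" using eqG.cancel[of k ns ?b] by simp
  finally have 1: "eqG k ns ([] @ [?b, ?bm] @ ([tF, ?b, tT] @ ?A @ [?bm])) []" by simp
  have "eqG k ns ([tF, ?b, tT] @ ?A @ [?bm]) ([] @ [?b, inv_letter ?b] @ ([tF, ?b, tT] @ ?A @ [?bm]))"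
    using eqG_insert_cancel_pair[of k ns "[]" "[tF, ?b, tT] @ ?A @ [?bm]" ?b] by simp
  also have "eqG k ns \<dots> []" using 1 by simp
  finally have "eqG k ns (([tF, ?b, tT] @ ?A) @ inv_word [?b]) []" by (simp add: inv_word_def)
  then have 2: "eqG k ns ([tF, ?b, tT] @ ?A) [?b]" by (rule eqG_if_append_inv_word)
  have "eqG k ns ([tF, ?b] @ (?A @ [tT]) @ []) ([tF, ?b] @ (tT # ?A) @ [])" by (rule eqG.cong[OF eqG_gpow_a_tT])
  then have "eqG k ns ([tF, ?b] @ ?A @ [tT]) [?b]" using 2 by (simp add: eqG.trans)
  then have "eqG k ns (([tF, ?b] @ ?A @ [tT]) @ [tF]) ([?b] @ [tF])" using eqG_append by blast
  then have 3: "eqG k ns (([tF, ?b] @ ?A) @ [tT, tF] @ []) [?b, tF]" by simp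
  have "eqG k ns (([tF, ?b] @ ?A) @ [tT, inv_letter tT] @ []) (([tF, ?b] @ ?A) @ [])" by (rule eqG_delete_cancel_pair)
  then have "eqG k ns ([tF, ?b] @ ?A) (([tF, ?b] @ ?A) @ [tT, tF] @ [])" by (simp add: eqG.sym)
  then have "eqG k ns ([tF, ?b] @ ?A) [?b, tF]" using 3 by (rule eqG.trans)
  then show ?thesis by (simp add: eqG.sym)
qed

lemma eqG_b_inv_tF:
  assumes i: "1 \<le> i" "i \<le> k"
  shows "eqG k ns [(Gb i, True), tF] (tF # gpow Ga (ns i) @ [(Gb i, True)])"
proof -
  let ?b = "(Gb i, False)" and ?bm = "(Gb i, True)" and ?A = "gpow Ga (- ns i)" and ?Ap = "gpow Ga (ns i)"
  have "eqG k ns ([] @ (tF # ?Ap @ [?bm])) ([] @ [inv_letter ?b, ?b] @ (tF # ?Ap @ [?bm]))" by (rule eqG_insert_cancel_pair_inv)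
  also have "[] @ [inv_letter ?b, ?b] @ (tF # ?Ap @ [?bm]) = [?bm] @ [?b, tF] @ (?Ap @ [?bm])" by simp
  also have "eqG k ns \<dots> ([?bm] @ (tF # ?b # ?A) @ (?Ap @ [?bm]))" by (rule eqG.cong[OF eqG_b_tF[OF i]])
  also have "[?bm] @ (tF # ?b # ?A) @ (?Ap @ [?bm]) = [?bm, tF, ?b] @ (inv_word ?Ap @ ?Ap) @ [?bm]"
    by (simp add: inv_word_gpow)
  also have "eqG k ns \<dots> ([?bm, tF, ?b] @ [] @ [?bm])" by (rule eqG.cong[OF eqG_inv_word_append])
  also have "[?bm, tF, ?b] @ [] @ [?bm] = [?bm, tF] @ [?b, inv_letter ?b] @ []" by simp
  also have "eqG k ns \<dots> ([?bm, tF] @ [])" by (rule eqG_delete_cancel_pair)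
  finally show ?thesis by (simp add: eqG.sym)
qed

definition b_letter_of :: "nat \<Rightarrow> letter \<Rightarrow> bool" where
  "b_letter_of k x \<longleftrightarrow> (\<exists>i. fst x = Gb i \<and> 1 \<le> i \<and> i \<le> k)"

lemma eqG_b_letter_tF:
  assumes "b_letter_of k s"
  shows "eqG k ns [s, tF] (tF # gpow Ga (pre_exp ns (-1) s) @ [s] @ gpow Ga (post_exp ns (-1) s))"
proof -
  obtain i e where s: "s = (Gb i, e)" and i: "1 \<le> i" "i \<le> k" using assms by (auto simp: b_letter_of_def) (metis prod.collapse)
  show ?thesis
  proof (cases e)
    case True then show ?thesis using eqG_b_inv_tF[OF i, of ns] by (simp add: s pre_exp_def post_exp_def)
  next
    case False then show ?thesis using eqG_b_tF[OF i, of ns] by (simp add: s pre_exp_def post_exp_def)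
  qed
qed

lemma eqG_syls_word_tF:
  assumes "\<forall>x\<in>set r. b_letter_of k (fst x)"
  shows "eqG k ns (syls_word (c0, r) @ [tF]) (tF # syls_word (twist ns (-1) (c0, r)))"
  using assms
proof (induction r arbitrary: c0)
  case Nil
  then show ?case by (simp add: twist_def eqG_gpow_a_tF)
next
  case (Cons y r)
  obtain s c where y: "y = (s, c)" by (cases y)
  have ok: "b_letter_of k s" using Cons.prems y by simp
  let ?T = "concat (map (\<lambda>x. fst x # gpow Ga (snd x)) (twist_syls ns (-1) 0 r))"
  let ?G1 = "gpow Ga (pre_exp ns (-1) s)" and ?G2 = "gpow Ga (post_exp ns (-1) s)"
  have IH: "eqG k ns (syls_word (c, r) @ [tF]) (tF # gpow Ga (c + carry ns (-1) 0 r) @ ?T)"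
    using Cons.IH[of c] Cons.prems by (simp add: twist_def syls_word_def)
  have "syls_word (c0, y # r) @ [tF] = (gpow Ga c0 @ [s]) @ (syls_word (c, r) @ [tF]) @ []"
    by (simp add: syls_word_Cons y)
  also have "eqG k ns \<dots> ((gpow Ga c0 @ [s]) @ (tF # gpow Ga (c + carry ns (-1) 0 r) @ ?T) @ [])"
    by (rule eqG.cong[OF IH])
  also have "\<dots> = gpow Ga c0 @ [s, tF] @ (gpow Ga (c + carry ns (-1) 0 r) @ ?T)" by simp
  also have "eqG k ns \<dots> (gpow Ga c0 @ (tF # ?G1 @ [s] @ ?G2) @ (gpow Ga (c + carry ns (-1) 0 r) @ ?T))"
    by (rule eqG.cong[OF eqG_b_letter_tF[OF ok]])
  also have "\<dots> = [] @ (gpow Ga c0 @ [tF]) @ (?G1 @ [s] @ ?G2 @ gpow Ga (c + carry ns (-1) 0 r) @ ?T)" by simp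
  also have "eqG k ns \<dots> ([] @ (tF # gpow Ga c0) @ (?G1 @ [s] @ ?G2 @ gpow Ga (c + carry ns (-1) 0 r) @ ?T))"
    by (rule eqG.cong[OF eqG_gpow_a_tF])
  also have "\<dots> = [tF] @ (gpow Ga c0 @ ?G1) @ ([s] @ ?G2 @ gpow Ga (c + carry ns (-1) 0 r) @ ?T)" by simp
  also have "eqG k ns \<dots> ([tF] @ gpow Ga (c0 + pre_exp ns (-1) s) @ ([s] @ ?G2 @ gpow Ga (c + carry ns (-1) 0 r) @ ?T))"
    by (rule eqG.cong[OF eqG_gpow_add])
  also have "\<dots> = (tF # gpow Ga (c0 + pre_exp ns (-1) s) @ [s]) @ (?G2 @ gpow Ga (c + carry ns (-1) 0 r)) @ ?T" by simp
  also have "eqG k ns \<dots> ((tF # gpow Ga (c0 + pre_exp ns (-1) s) @ [s]) @ gpow Ga (post_exp ns (-1) s + (c + carry ns (-1) 0 r)) @ ?T)"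
    by (rule eqG.cong[OF eqG_gpow_add])
  also have "\<dots> = tF # syls_word (twist ns (-1) (c0, y # r))"
    by (simp add: twist_def syls_word_def y carry_def algebra_simps)
  finally show ?case .
qed

definition b_letters_of :: "nat \<Rightarrow> int \<times> syllable list \<Rightarrow> bool" where
  "b_letters_of k p \<longleftrightarrow> (\<forall>x\<in>set (snd p). b_letter_of k (fst x))"

lemma alphabet_iff: "x \<in> alphabet k \<longleftrightarrow> fst x = Ga \<or> fst x = Gt \<or> (\<exists>i. fst x = Gb i \<and> 1 \<le> i \<and> i \<le> k)"
  by (cases x) (auto simp: alphabet_def gens_def)

lemma b_letter_of_twist_syls: "\<forall>x\<in>set r. b_letter_of k (fst x) \<Longrightarrow> \<forall>x\<in>set (twist_syls ns d e r). b_letter_of k (fst x)"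
  by (induction r) auto

lemma b_letters_of_twist: "b_letters_of k p \<Longrightarrow> b_letters_of k (twist ns d p)"
  unfolding b_letters_of_def twist_def using b_letter_of_twist_syls by simp

lemma b_letters_of_append_a_pow: "b_letters_of k p \<Longrightarrow> b_letters_of k (append_a_pow c p)"
  unfolding b_letters_of_def append_a_pow_def add_last_exp_def by (auto dest: in_set_butlastD)

lemma b_letters_of_nf_step: "b_letters_of k p \<Longrightarrow> x \<in> alphabet k \<Longrightarrow> b_letters_of k (snd (nf_step ns (m, p) x))"
proof -
  assume ok: "b_letters_of k p" and x: "x \<in> alphabet k"
  obtain g e where xe: "x = (g, e)" by (cases x)
  show ?thesis
  proof (cases g)
    case Ga then show ?thesis using ok by (simp add: xe b_letters_of_append_a_pow)
  next
    case Gt then show ?thesis using ok by (simp add: xe b_letters_of_twist)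
  next
    case (Gb i)
    then have "b_letter_of k (Gb i, e)" using x by (auto simp: xe alphabet_iff b_letter_of_def)
    then show ?thesis using ok Gb by (auto simp: xe append_b_def b_letters_of_def dest: in_set_butlastD)
  qed
qed

lemma eqG_syls_word_tT:
  assumes "b_letters_of k p"
  shows "eqG k ns (syls_word p @ [tT]) (tT # syls_word (twist ns 1 p))"
proof -
  obtain c r where p1: "twist ns 1 p = (c, r)" by (cases "twist ns 1 p")
  have okr: "\<forall>x\<in>set r. b_letter_of k (fst x)" using b_letters_of_twist[OF assms, of ns 1] p1 by (simp add: b_letters_of_def)
  have bk: "twist ns (-1) (c, r) = p" using twist_twist[of ns "-1" 1 p] p1 by simp
  have P: "eqG k ns (syls_word (c, r) @ [tF]) (tF # syls_word p)" using eqG_syls_word_tF[OF okr, of ns c] bk by simp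
  have "eqG k ns ([] @ (syls_word p @ [tT])) ([] @ [inv_letter tF, tF] @ (syls_word p @ [tT]))" by (rule eqG_insert_cancel_pair_inv)
  also have "\<dots> = [tT] @ (tF # syls_word p) @ [tT]" by simp
  also have "eqG k ns \<dots> ([tT] @ (syls_word (c, r) @ [tF]) @ [tT])" by (rule eqG.cong[OF eqG.sym[OF P]])
  also have "\<dots> = (tT # syls_word (c, r)) @ [tF, inv_letter tF] @ []" by simp
  also have "eqG k ns \<dots> ((tT # syls_word (c, r)) @ [])" by (rule eqG_delete_cancel_pair)
  finally show ?thesis using p1 by simp
qed

lemma nf_word_simp: "nf_word (m, p) = gpow Gt m @ syls_word p" by (simp add: nf_word_def)

lemma eqG_syls_word_a:
  "eqG k ns (syls_word p @ [(Ga, e)]) (syls_word (append_a_pow (if e then -1 else 1) p))"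
proof -
  let ?d = "if e then -1 else (1::int)"
  have ge: "eqG k ns (gpow Ga c @ [(Ga, e)]) (gpow Ga (c + ?d))" for c
    using eqG_gpow_snoc_pos[of k ns Ga c] eqG_gpow_snoc_neg[of k ns Ga c] by (cases e) auto
  obtain c0 r where p: "p = (c0, r)" by (cases p)
  show ?thesis
  proof (cases r rule: rev_cases)
    case Nil
    then show ?thesis using eqG.cong[OF ge, of "[]" c0 "[]"] by (simp add: p append_a_pow_def)
  next
    case (snoc r0 y)
    have "syls_word p @ [(Ga, e)] = (syls_word (c0, r0) @ [fst y]) @ (gpow Ga (snd y) @ [(Ga, e)]) @ []"
      by (simp add: p snoc syls_word_snoc)
    also have "eqG k ns \<dots> ((syls_word (c0, r0) @ [fst y]) @ gpow Ga (snd y + ?d) @ [])"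
      by (rule eqG.cong[OF ge])
    finally show ?thesis by (simp add: p snoc append_a_pow_def add_last_exp_def syls_word_snoc)
  qed
qed

lemma eqG_syls_word_b: "eqG k ns (syls_word (c0, r) @ [s]) (syls_word (append_b s (c0, r)))"
proof (cases "r \<noteq> [] \<and> last r = (inv_letter s, 0)")
  case True
  then obtain r0 where r: "r = r0 @ [(inv_letter s, 0)]" by (metis append_butlast_last_id)
  have "syls_word (c0, r) @ [s] = syls_word (c0, r0) @ [inv_letter s, s] @ []"
    by (simp add: r syls_word_snoc)
  also have "eqG k ns \<dots> (syls_word (c0, r0) @ [])" by (rule eqG_delete_cancel_pair_inv)
  finally show ?thesis using True r by (simp add: append_b_def)
next
  case False
  then show ?thesis by (simp add: append_b_app syls_word_snoc)
qed

lemma eqG_nf_word_snoc: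
  "eqG k ns (syls_word p @ [x]) (syls_word p') \<Longrightarrow> eqG k ns (nf_word (m, p) @ [x]) (nf_word (m, p'))"
  using eqG.cong[of k ns "syls_word p @ [x]" "syls_word p'" "gpow Gt m" "[]"] by (simp add: nf_word_simp)

lemma eqG_nf_word_step:
  assumes ok: "b_letters_of k p"
  shows "eqG k ns (nf_word (m, p) @ [x]) (nf_word (nf_step ns (m, p) x))"
proof -
  obtain g e where xe: "x = (g, e)" by (cases x)
  show ?thesis
  proof (cases g)
    case Ga
    show ?thesis using eqG_nf_word_snoc[OF eqG_syls_word_a] by (simp add: xe Ga)
  next
    case (Gb i)
    show ?thesis using eqG_nf_word_snoc[OF eqG_syls_word_b[of k ns "fst p" "snd p" x]] by (simp add: xe Gb)
  next
    case Gt
    show ?thesis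
    proof (cases e)
      case False
      obtain c0 r where p: "p = (c0, r)" by (cases p)
      have "nf_word (m, p) @ [x] = gpow Gt m @ (syls_word p @ [tF]) @ []" by (simp add: nf_word_simp xe Gt False)
      also have "eqG k ns \<dots> (gpow Gt m @ (tF # syls_word (twist ns (-1) p)) @ [])"
        by (rule eqG.cong) (use eqG_syls_word_tF[of r k ns c0] ok in \<open>simp add: b_letters_of_def p\<close>)
      also have "\<dots> = [] @ (gpow Gt m @ [tF]) @ syls_word (twist ns (-1) p)" by simp
      also have "eqG k ns \<dots> ([] @ gpow Gt (m + 1) @ syls_word (twist ns (-1) p))"
        by (rule eqG.cong[OF eqG_gpow_snoc_pos])
      finally show ?thesis by (simp add: xe Gt False nf_word_simp)
    next
      case True
      have "nf_word (m, p) @ [x] = gpow Gt m @ (syls_word p @ [tT]) @ []" by (simp add: nf_word_simp xe Gt True)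
      also have "eqG k ns \<dots> (gpow Gt m @ (tT # syls_word (twist ns 1 p)) @ [])"
        by (rule eqG.cong[OF eqG_syls_word_tT[OF ok]])
      also have "\<dots> = [] @ (gpow Gt m @ [tT]) @ syls_word (twist ns 1 p)" by simp
      also have "eqG k ns \<dots> ([] @ gpow Gt (m - 1) @ syls_word (twist ns 1 p))"
        by (rule eqG.cong[OF eqG_gpow_snoc_neg])
      finally show ?thesis by (simp add: xe Gt True nf_word_simp)
    qed
  qed
qed

lemma nf_run_invariants:
  "v \<in> lists (alphabet k) \<Longrightarrow> eqG k ns v (nf_word (nf_run ns (0, 0, []) v)) \<and> reduced (snd (nf_run ns (0, 0, []) v))
     \<and> b_letters_of k (snd (nf_run ns (0, 0, []) v))"
proof (induction v rule: rev_induct)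
  case Nil then show ?case by (simp add: nf_word_def reduced_def b_letters_of_def)
next
  case (snoc x v)
  let ?s = "nf_run ns (0, 0, []) v"
  from snoc have IH: "eqG k ns v (nf_word ?s)" "reduced (snd ?s)" "b_letters_of k (snd ?s)" and x: "x \<in> alphabet k" by auto
  obtain m p where s: "?s = (m, p)" by (cases ?s)
  have "eqG k ns (v @ [x]) (nf_word ?s @ [x])" using eqG_append[OF IH(1) eqG.refl] .
  also have "eqG k ns (nf_word ?s @ [x]) (nf_word (nf_step ns ?s x))" using eqG_nf_word_step IH x s by simp
  finally show ?case using IH x s reduced_nf_step[of "(m, p)" ns x] b_letters_of_nf_step[of k p x ns m] by simp
qed

lemma eqG_nf_word_nf_run: "v \<in> lists (alphabet k) \<Longrightarrow> eqG k ns v (nf_word (nf_run ns (0, 0, []) v))"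
  using nf_run_invariants by blast

lemma twist_empty[simp]: "twist ns d (0, []) = (0, [])" by (simp add: twist_def)

lemma nf_run_replicate_t: "nf_run ns (j, (0, [])) (replicate n (Gt, e)) = (j + (if e then - int n else int n), (0, []))"
  by (induction n arbitrary: j) (auto simp: algebra_simps)

lemma nf_run_gpow_t: "nf_run ns (j, (0, [])) (gpow Gt m) = (j + m, (0, []))"
  by (cases "0 \<le> m") (auto simp: gpow_def nf_run_replicate_t)

text \<open>The transition condition of the automaton recognizing normal forms: a t-letter may only
  follow the same t-letter, any other letter anything except its inverse.\<close>
definition may_follow :: "letter \<Rightarrow> letter \<Rightarrow> bool" where
  "may_follow y x \<longleftrightarrow> (if fst x = Gt then y = x else x \<noteq> inv_letter y)"

fun may_follow_opt :: "letter option \<Rightarrow> letter \<Rightarrow> bool" where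
  "may_follow_opt None x = True" | "may_follow_opt (Some y) x = may_follow y x"

definition last_opt :: "letter list \<Rightarrow> letter option" where
  "last_opt w = (if w = [] then None else Some (last w))"

definition nf_last_letter :: "nf_state \<Rightarrow> letter option" where
  "nf_last_letter s = (let m = fst s; c0 = fst (snd s); r = snd (snd s) in
     if r \<noteq> [] then (if snd (last r) > 0 then Some aF else if snd (last r) < 0 then Some aT else Some (fst (last r)))
     else if c0 > 0 then Some aF else if c0 < 0 then Some aT
     else if m > 0 then Some tF else if m < 0 then Some tT else None)"

lemma last_opt_append: "last_opt (A @ B) = (if B = [] then last_opt A else last_opt B)"
  by (simp add: last_opt_def)
lemma last_opt_gpow: "last_opt (gpow g c) = (if c = 0 then None else Some (g, c < 0))"
  by (auto simp: last_opt_def gpow_def)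
lemma gpow_Nil_iff[simp]: "gpow g c = [] \<longleftrightarrow> c = 0"
  by (auto simp: gpow_def)

lemma last_gpow: "c \<noteq> 0 \<Longrightarrow> last (gpow g c) = (g, c < 0)"
  by (auto simp: gpow_def)

lemma last_nf_word: "last_opt (nf_word (m, c0, r)) = nf_last_letter (m, c0, r)"
proof (cases "r = []")
  case True
  then show ?thesis by (auto simp: nf_word_def last_opt_append last_opt_gpow nf_last_letter_def)
next
  case False
  then obtain r0 y where r: "r = r0 @ [y]" by (metis append_butlast_last_id)
  show ?thesis by (auto simp: nf_word_def r syls_word_snoc last_opt_append last_opt_gpow nf_last_letter_def Let_def last_gpow)
       (auto simp: last_opt_def gpow_def)
qed

lemma is_b_letter_not_t: "is_b_letter x \<Longrightarrow> fst x \<noteq> Gt \<and> fst x \<noteq> Ga"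
  by (cases x; cases "fst x") auto

lemma gpow_snoc:
  "(if e then c \<le> 0 else 0 \<le> c) \<Longrightarrow> gpow g c @ [(g, e)] = gpow g (c + (if e then -1 else 1))"
  using gpow_snoc_neg[of c g] gpow_snoc_pos[of c g] by (cases e) auto

lemma nf_word_step_snoc:
  assumes v: "reduced p" and c: "may_follow_opt (nf_last_letter (m, p)) x"
  shows "nf_word (nf_step ns (m, p) x) = nf_word (m, p) @ [x]"
proof -
  obtain g e where xe: "x = (g, e)" by (cases x)
  obtain c0 r where p: "p = (c0, r)" by (cases p)
  have lastb: "r \<noteq> [] \<Longrightarrow> is_b_letter (fst (last r))" using v by (simp add: reduced_def p)
  note unf = nf_last_letter_def Let_def p xe may_follow_def inv_letter_def
  show ?thesis
  proof (cases g)
    case Gt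
    have "r = []"
      using c lastb is_b_letter_not_t[of "fst (last r)"] by (auto simp: unf Gt split: if_splits)
    moreover have "c0 = 0" "if e then m \<le> 0 else 0 \<le> m"
      using c \<open>r = []\<close> by (auto simp: unf Gt split: if_splits)
    ultimately show ?thesis by (auto simp: p xe Gt nf_word_def gpow_snoc)
  next
    case Ga
    show ?thesis
    proof (cases r rule: rev_cases)
      case Nil
      then have "if e then c0 \<le> 0 else 0 \<le> c0" using c by (auto simp: unf Ga split: if_splits)
      then show ?thesis using Nil by (simp add: p xe Ga nf_word_def append_a_pow_def gpow_snoc)
    next
      case (snoc r0 y)
      then have "is_b_letter (fst y)" using lastb by simp
      then have "if e then snd y \<le> 0 else 0 \<le> snd y"
        using c is_b_letter_not_t[of "fst y"] snoc by (auto simp: unf Ga split: if_splits)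
      then show ?thesis
        by (simp add: p snoc xe Ga nf_word_def append_a_pow_def add_last_exp_def syls_word_snoc gpow_snoc)
    qed
  next
    case (Gb i)
    have "\<not> (r \<noteq> [] \<and> last r = (inv_letter x, 0))"
      using c by (auto simp: nf_last_letter_def Let_def p may_follow_def xe Gb)
    then show ?thesis by (simp add: xe Gb p append_b_app nf_word_def syls_word_snoc)
  qed
qed

fun gen_index :: "gen \<Rightarrow> nat" where "gen_index Ga = 0" | "gen_index Gt = 1" | "gen_index (Gb i) = i + 2"
fun index_gen :: "nat \<Rightarrow> gen" where "index_gen 0 = Ga" | "index_gen (Suc 0) = Gt" | "index_gen (Suc (Suc i)) = Gb i"

definition letter_code :: "letter \<Rightarrow> nat" where "letter_code x = 2 * gen_index (fst x) + (if snd x then 1 else 0)"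
definition letter_decode :: "nat \<Rightarrow> letter" where "letter_decode c = (index_gen (c div 2), odd c)"

lemma index_gen_gen_index[simp]: "index_gen (gen_index g) = g" by (cases g) (auto simp: numeral_2_eq_2)

lemma letter_decode_letter_code[simp]: "letter_decode (letter_code x) = x"
  by (cases x) (auto simp: letter_code_def letter_decode_def)

text \<open>State 0 is the initial state, 1 a rejecting sink, and letter_code y + 2 records that the
  word read so far ends with y.\<close>
definition nf_dfa :: "nat \<Rightarrow> letter \<Rightarrow> nat" where
  "nf_dfa q x = (if q = 1 then 1 else if may_follow_opt (if q = 0 then None else Some (letter_decode (q - 2))) x then letter_code x + 2 else 1)"

definition dfa_state :: "letter option \<Rightarrow> nat" where
  "dfa_state ov = (case ov of None \<Rightarrow> 0 | Some y \<Rightarrow> letter_code y + 2)"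

definition nf_accepts :: "letter list \<Rightarrow> bool" where "nf_accepts w \<longleftrightarrow> foldl nf_dfa 0 w \<noteq> 1"

lemma nf_dfa_dfa_state: "nf_dfa (dfa_state ov) x = (if may_follow_opt ov x then letter_code x + 2 else 1)"
  by (cases ov) (auto simp: nf_dfa_def dfa_state_def)

lemma foldl_nf_dfa_sink: "foldl nf_dfa 1 w = 1"
  by (induction w) (auto simp: nf_dfa_def)

lemma foldl_nf_dfa_accepted: "nf_accepts w \<Longrightarrow> foldl nf_dfa 0 w = dfa_state (last_opt w)"
proof (induction w rule: rev_induct)
  case Nil then show ?case by (simp add: dfa_state_def last_opt_def)
next
  case (snoc x w)
  have a: "nf_accepts w"
  proof (rule ccontr)
    assume "\<not> nf_accepts w"
    then have "foldl nf_dfa 0 (w @ [x]) = 1" by (simp add: nf_accepts_def nf_dfa_def)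
    then show False using snoc.prems by (simp add: nf_accepts_def)
  qed
  then have f: "foldl nf_dfa 0 w = dfa_state (last_opt w)" by (rule snoc.IH)
  show ?case using snoc.prems f nf_dfa_dfa_state[of "last_opt w" x]
    by (auto simp: nf_accepts_def dfa_state_def last_opt_def split: if_splits)
qed

lemma nf_accepts_snoc: "nf_accepts (w @ [x]) \<longleftrightarrow> nf_accepts w \<and> may_follow_opt (last_opt w) x"
proof (cases "nf_accepts w")
  case True
  then have f: "foldl nf_dfa 0 w = dfa_state (last_opt w)" by (rule foldl_nf_dfa_accepted)
  show ?thesis using f True nf_dfa_dfa_state[of "last_opt w" x] by (simp add: nf_accepts_def)
next
  case False
  then show ?thesis by (auto simp: nf_accepts_def nf_dfa_def foldl_nf_dfa_sink)
qed

lemma may_follow_self: "may_follow x x" by (cases x) (auto simp: may_follow_def inv_letter_def)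

lemma nf_accepts_append_replicate: "nf_accepts W \<Longrightarrow> may_follow_opt (last_opt W) x \<Longrightarrow> nf_accepts (W @ replicate n x)"
proof (induction n)
  case (Suc n)
  have "W @ replicate (Suc n) x = (W @ replicate n x) @ [x]" by (simp add: replicate_append_same)
  moreover have "may_follow_opt (last_opt (W @ replicate n x)) x" using Suc.prems
    by (cases n) (auto simp: last_opt_append may_follow_self last_opt_def)
  ultimately show ?case using Suc nf_accepts_snoc[of "W @ replicate n x" x] by simp
qed simp

lemma nf_accepts_append_gpow: "nf_accepts W \<Longrightarrow> (c \<noteq> 0 \<Longrightarrow> may_follow_opt (last_opt W) (g, c < 0)) \<Longrightarrow> nf_accepts (W @ gpow g c)"
  by (cases "c = 0") (auto simp: gpow_def intro: nf_accepts_append_replicate)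

lemma nf_accepts_Nil: "nf_accepts []" by (simp add: nf_accepts_def)

lemma nf_accepts_nf_word: "reduced (c0, r) \<Longrightarrow> nf_accepts (nf_word (m, c0, r))"
proof (induction r rule: rev_induct)
  case Nil
  have 1: "nf_accepts (gpow Gt m)" using nf_accepts_append_gpow[OF nf_accepts_Nil, of m Gt] by (simp add: last_opt_def)
  have "nf_accepts (gpow Gt m @ gpow Ga c0)"
    by (rule nf_accepts_append_gpow[OF 1]) (auto simp: last_opt_gpow may_follow_def inv_letter_def)
  then show ?case by (simp add: nf_word_def)
next
  case (snoc y r)
  have v: "reduced (c0, r)" using snoc.prems by (simp add: reduced_def freely_reduced_snoc)
  have ib: "is_b_letter (fst y)" using snoc.prems by (simp add: reduced_def)
  have nz: "r \<noteq> [] \<longrightarrow> fst y = inv_letter (fst (last r)) \<longrightarrow> snd (last r) \<noteq> 0"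
    using snoc.prems by (simp add: reduced_def freely_reduced_snoc)
  have c1: "may_follow_opt (nf_last_letter (m, c0, r)) (fst y)"
    using ib is_b_letter_not_t[of "fst y"] nz
    by (auto simp: nf_last_letter_def Let_def may_follow_def inv_letter_def)
  have a1: "nf_accepts (nf_word (m, c0, r) @ [fst y])"
    using snoc.IH[OF v] c1 last_nf_word[of m c0 r] by (simp add: nf_accepts_snoc)
  have "nf_accepts ((nf_word (m, c0, r) @ [fst y]) @ gpow Ga (snd y))"
    by (rule nf_accepts_append_gpow[OF a1]) (use ib is_b_letter_not_t[of "fst y"] in \<open>auto simp: last_opt_def may_follow_def inv_letter_def\<close>)
  then show ?case by (simp add: nf_word_def syls_word_snoc)
qed

lemma nf_word_nf_run_if_nf_accepts:
  "w \<in> lists (alphabet k) \<Longrightarrow> nf_accepts w \<Longrightarrow> w = nf_word (nf_run ns (0, 0, []) w)"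
proof (induction w rule: rev_induct)
  case Nil then show ?case by (simp add: nf_word_def)
next
  case (snoc x w)
  let ?s = "nf_run ns (0, 0, []) w"
  have aw: "nf_accepts w" and fol: "may_follow_opt (last_opt w) x" using snoc.prems by (auto simp: nf_accepts_snoc)
  have wl: "w \<in> lists (alphabet k)" and x: "x \<in> alphabet k" using snoc.prems by auto
  have e: "w = nf_word ?s" using snoc.IH[OF wl aw] .
  obtain m p where s: "?s = (m, p)" by (cases ?s)
  obtain c0 r where p: "p = (c0, r)" by (cases p)
  have v: "reduced p" using nf_run_invariants[OF wl, of ns] s by simp
  have "last_opt w = nf_last_letter (m, p)" using e s p last_nf_word[of m c0 r] by simp
  then have c: "may_follow_opt (nf_last_letter (m, p)) x" using fol by simp
  have "nf_word (nf_step ns (m, p) x) = nf_word (m, p) @ [x]" by (rule nf_word_step_snoc[OF v c])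
  then show ?case using e s by simp
qed

lemma proper_map_if_ge_shift:
  fixes f :: "real \<Rightarrow> real"
  assumes cont: "continuous_on {0..} f" and img: "f ` {0..} \<subseteq> {0..}"
    and grow: "\<And>s. s \<ge> 0 \<Longrightarrow> f s \<ge> s - T"
  shows "proper_map (top_of_set {0..}) (top_of_set {0..}) f"
proof (rule compact_imp_proper_map)
  show "k_space (top_of_set {0::real..})"
    by (simp add: metrizable_imp_k_space metrizable_space_subtopology metrizable_space_euclidean)
  show "kc_space (top_of_set {0::real..})"
    by (simp add: kc_space_subtopology kc_space_euclidean)
  then show "continuous_map (top_of_set {0..}) (top_of_set {0..}) f \<or> kc_space (top_of_set {0::real..})" ..
  show "f \<in> topspace (top_of_set {0..}) \<rightarrow> topspace (top_of_set {0..})"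
    using img by auto
  fix K :: "real set" assume "compactin (top_of_set {0..}) K"
  then have cK: "compact K" by (auto simp: compactin_subtopology compactin_euclidean_iff)
  then obtain B where B: "\<And>x. x \<in> K \<Longrightarrow> x \<le> B"
    using compact_imp_bounded bounded_real by (metis abs_le_D1)
  let ?A = "{x \<in> topspace (top_of_set {0..}). f x \<in> K}"
  have "?A = {0..} \<inter> f -` K" by auto
  then have "closed ?A"
    using continuous_closed_preimage[OF cont closed_atLeast compact_imp_closed[OF cK]] by simp
  moreover have "bounded ?A"
    using bounded_closed_interval[of 0 "B + T"] by (rule bounded_subset) (use B grow in force)
  ultimately show "compactin (top_of_set {0..}) ?A"
    by (auto simp: compactin_subtopology compactin_euclidean_iff compact_eq_bounded_closed)
qed

lemma inv_letter_in_lists: "x \<in> alphabet k \<Longrightarrow> inv_letter x \<in> alphabet k"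
  by (cases x) (auto simp: alphabet_def inv_letter_def)

lemma inv_word_in_lists: "u \<in> lists (alphabet k) \<Longrightarrow> inv_word u \<in> lists (alphabet k)"
  by (auto simp: inv_word_def inv_letter_in_lists)

lemma dword_le: "z \<in> lists (alphabet k) \<Longrightarrow> eqG k ns (P @ z) Q \<Longrightarrow> dword k ns P Q \<le> real (length z)"
  unfolding dword_def by (rule of_nat_mono, rule Least_le) blast

lemma dword_nonneg: "0 \<le> dword k ns P Q" by (simp add: dword_def)

lemma dword_witness: "P \<in> lists (alphabet k) \<Longrightarrow> Q \<in> lists (alphabet k) \<Longrightarrow>
   \<exists>z \<in> lists (alphabet k). real (length z) = dword k ns P Q \<and> eqG k ns (P @ z) Q"
proof -
  assume P: "P \<in> lists (alphabet k)" and Q: "Q \<in> lists (alphabet k)"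
  let ?z = "inv_word P @ Q"
  have "eqG k ns ([] @ (P @ inv_word P) @ Q) ([] @ [] @ Q)" by (rule eqG.cong[OF eqG_append_inv_word])
  then have e: "eqG k ns (P @ ?z) Q" by simp
  have z: "?z \<in> lists (alphabet k)" using P Q inv_word_in_lists by auto
  have "\<exists>n. \<exists>z\<in>lists (alphabet k). length z = n \<and> eqG k ns (P @ z) Q" using e z by blast
  from LeastI_ex[OF this] show ?thesis unfolding dword_def by auto
qed

lemma dword_triangle:
  assumes "P \<in> lists (alphabet k)" "Q \<in> lists (alphabet k)" "R \<in> lists (alphabet k)"
  shows "dword k ns P R \<le> dword k ns P Q + dword k ns Q R"
proof -
  obtain z1 where z1: "z1 \<in> lists (alphabet k)" "real (length z1) = dword k ns P Q" "eqG k ns (P @ z1) Q"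
    using dword_witness[OF assms(1,2)] by blast
  obtain z2 where z2: "z2 \<in> lists (alphabet k)" "real (length z2) = dword k ns Q R" "eqG k ns (Q @ z2) R"
    using dword_witness[OF assms(2,3)] by blast
  have "eqG k ns ((P @ z1) @ z2) (Q @ z2)" by (rule eqG_append[OF z1(3) eqG.refl])
  then have "eqG k ns (P @ (z1 @ z2)) R" using z2(3) by (simp add: eqG.trans)
  then have "dword k ns P R \<le> real (length (z1 @ z2))" by (rule dword_le[rotated]) (use z1 z2 in auto)
  then show ?thesis using z1 z2 by simp
qed

lemma dword_append_le: "d \<in> lists (alphabet k) \<Longrightarrow> dword k ns P (P @ d) \<le> real (length d)"
  by (rule dword_le) auto

lemma dword_append_le': "d \<in> lists (alphabet k) \<Longrightarrow> dword k ns (P @ d) P \<le> real (length d)"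
proof -
  assume d: "d \<in> lists (alphabet k)"
  have "eqG k ns (P @ (d @ inv_word d) @ []) (P @ [] @ [])" by (rule eqG.cong[OF eqG_append_inv_word])
  then have "eqG k ns ((P @ d) @ inv_word d) P" by simp
  then have "dword k ns (P @ d) P \<le> real (length (inv_word d))" by (rule dword_le[rotated]) (use d inv_word_in_lists in auto)
  then show ?thesis by (simp add: inv_word_def)
qed

lemma dword_self: "dword k ns P P = 0"
  using dword_le[of "[]" k ns P P] dword_nonneg[of k ns P P] by simp

lemma dword_le_if_nf_run_eq:
  assumes "P \<in> lists (alphabet k)" "Q \<in> lists (alphabet k)" "z \<in> lists (alphabet k)"
    and "nf_run ns (0, 0, []) (P @ z) = nf_run ns (0, 0, []) Q"
  shows "dword k ns P Q \<le> real (length z)"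
proof -
  have 1: "eqG k ns (P @ z) (nf_word (nf_run ns (0, 0, []) (P @ z)))" using assms by (intro eqG_nf_word_nf_run) auto
  have 2: "eqG k ns Q (nf_word (nf_run ns (0, 0, []) Q))" using assms by (intro eqG_nf_word_nf_run) auto
  have "eqG k ns (P @ z) Q" using 1 2 assms(4) by (metis eqG.sym eqG.trans)
  then show ?thesis by (rule dword_le[rotated]) (use assms in auto)
qed

lemma cdist_le: "cdist k ns (h, a, \<theta>) (h', a', \<eta>) \<le> \<theta> + dword k ns h h' + \<eta>"
  unfolding cdist_def Let_def by (auto intro: min.coboundedI1)

lemma take_in_lists: "w \<in> lists (alphabet k) \<Longrightarrow> take j w \<in> lists (alphabet k)"
  by (meson in_lists_conv_set in_set_takeD)

lemma dword_take_le:
  assumes w: "w \<in> lists (alphabet k)" and ij: "i \<le> j"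
  shows "dword k ns (take i w) (take j w) \<le> real (j - i)"
    and "dword k ns (take j w) (take i w) \<le> real (j - i)"
proof -
  let ?d = "drop i (take j w)"
  have tj: "take j w = take i w @ ?d" using ij by (metis append_take_drop_id min.absorb1 take_take)
  have d: "?d \<in> lists (alphabet k)" using w by (meson in_lists_conv_set in_set_dropD in_set_takeD)
  have l: "real (length ?d) \<le> real (j - i)" by simp
  show "dword k ns (take i w) (take j w) \<le> real (j - i)"
    using dword_append_le[OF d, of ns "take i w"] l unfolding tj[symmetric] by linarith
  show "dword k ns (take j w) (take i w) \<le> real (j - i)"
    using dword_append_le'[OF d, of ns "take i w"] l unfolding tj[symmetric] by linarith
qed

lemma wpath_vertex:
  assumes s: "0 \<le> s" and sl: "s < real (length w)"
  shows "\<exists>a \<theta>. 0 \<le> \<theta> \<and> \<theta> \<le> 1 \<and> (wpath w s = (take (nat \<lfloor>s\<rfloor>) w, a, \<theta>) \<or> wpath w s = (take (Suc (nat \<lfloor>s\<rfloor>)) w, a, \<theta>))"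
proof -
  let ?i = "nat \<lfloor>s\<rfloor>"
  have ri: "real ?i = of_int \<lfloor>s\<rfloor>" using s by simp
  have th: "0 \<le> s - real ?i" "s - real ?i \<le> 1" using ri by linarith+
  have il: "?i < length w" using sl s by linarith
  then have tk: "take ?i w @ [w ! ?i] = take (Suc ?i) w" by (simp add: take_Suc_conv_app_nth)
  show ?thesis
  proof (cases "snd (w ! ?i)")
    case True
    then have "wpath w s = (take (Suc ?i) w, fst (w ! ?i), 1 - (s - real ?i))"
      using sl tk by (simp add: wpath_def Let_def)
    then show ?thesis using th by (intro exI[of _ "fst (w ! ?i)"] exI[of _ "1 - (s - real ?i)"]) auto
  next
    case False
    then have "wpath w s = (take ?i w, fst (w ! ?i), s - real ?i)"
      using sl by (simp add: wpath_def Let_def)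
    then show ?thesis using th by (intro exI[of _ "fst (w ! ?i)"] exI[of _ "s - real ?i"]) auto
  qed
qed

lemma wpath_end: "real (length w) \<le> s \<Longrightarrow> wpath w s = (w, Ga, 0)"
  by (simp add: wpath_def)

lemma wpath_near_prefix:
  assumes w: "w \<in> lists (alphabet k)" and s: "0 \<le> s"
  obtains P a \<theta> where "wpath w s = (P, a, \<theta>)" "0 \<le> \<theta>" "\<theta> \<le> 1" "P \<in> lists (alphabet k)"
    "dword k ns P (take (nat \<lfloor>s\<rfloor>) w) \<le> 1" "dword k ns (take (nat \<lfloor>s\<rfloor>) w) P \<le> 1"
proof (cases "real (length w) \<le> s")
  case True
  then have "length w \<le> nat \<lfloor>s\<rfloor>" by (simp add: le_nat_iff le_floor_iff)
  then show ?thesis using that[of w Ga 0] wpath_end[OF True] dword_self[of k ns w] w by simp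
next
  case False
  let ?j = "nat \<lfloor>s\<rfloor>"
  obtain a \<theta> where "0 \<le> \<theta>" "\<theta> \<le> 1"
    "wpath w s = (take ?j w, a, \<theta>) \<or> wpath w s = (take (Suc ?j) w, a, \<theta>)"
    using wpath_vertex[OF s] False by (meson not_le)
  then show ?thesis
    using that dword_self[of k ns "take ?j w"] dword_take_le[OF w, of ?j "Suc ?j" ns]
      take_in_lists[OF w] by auto
qed

definition clamp :: "real \<Rightarrow> real" where "clamp x = max 0 (min 1 x)"

text \<open>The piecewise linear map sending j to g j for j \<le> N, continued with slope 1 after N.\<close>
definition reparam :: "(nat \<Rightarrow> nat) \<Rightarrow> nat \<Rightarrow> real \<Rightarrow> real" where
  "reparam g N s = real (g 0) + (\<Sum>i<N. (real (g (Suc i)) - real (g i)) * clamp (s - real i))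
     + max 0 (s - real N)"

lemma sum_ramps_full:
  "real n \<le> s \<Longrightarrow> (\<Sum>i<n. (real (g (Suc i)) - real (g i)) * clamp (s - real i)) = real (g n) - real (g 0)"
proof (induction n)
  case (Suc n)
  have "clamp (s - real n) = 1" using Suc.prems by (simp add: clamp_def)
  then show ?case using Suc by simp
qed simp

lemma sum_ramps_mid:
  assumes "j < n" "real j \<le> s" "s \<le> real j + 1"
  shows "(\<Sum>i<n. (real (g (Suc i)) - real (g i)) * clamp (s - real i))
    = real (g j) - real (g 0) + (real (g (Suc j)) - real (g j)) * (s - real j)"
  using assms
proof (induction n)
  case (Suc n)
  show ?case
  proof (cases "j < n")
    case True
    have "clamp (s - real n) = 0" using Suc.prems True by (simp add: clamp_def)
    then show ?thesis using Suc True by simp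
  next
    case False
    then have jn: "j = n" using Suc.prems by simp
    have "clamp (s - real n) = s - real n" using Suc.prems jn by (simp add: clamp_def)
    then show ?thesis using sum_ramps_full[of n s g] Suc.prems jn by simp
  qed
qed simp

lemma clamp_mono: "x \<le> y \<Longrightarrow> clamp x \<le> clamp y" by (simp add: clamp_def)
lemma clamp_nonneg: "0 \<le> clamp x" by (simp add: clamp_def)

lemma reparam_cont: "continuous_on A (reparam g N)"
  unfolding reparam_def clamp_def by (intro continuous_intros)

context
  fixes g :: "nat \<Rightarrow> nat" and N :: nat
  assumes g_mono: "\<forall>j<N. g j \<le> g (Suc j)"
begin

lemma reparam_mono: "x \<le> y \<Longrightarrow> reparam g N x \<le> reparam g N y"
  unfolding reparam_def using g_mono by (intro add_mono sum_mono mult_left_mono clamp_mono) auto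

lemma reparam_nonneg: "0 \<le> reparam g N x"
  unfolding reparam_def using g_mono
  by (intro add_nonneg_nonneg sum_nonneg mult_nonneg_nonneg clamp_nonneg) auto

lemma reparam_ge: "x - real N \<le> reparam g N x"
proof -
  have "0 \<le> (\<Sum>i<N. (real (g (Suc i)) - real (g i)) * clamp (x - real i))"
    using g_mono by (intro sum_nonneg mult_nonneg_nonneg clamp_nonneg) auto
  moreover have "x - real N \<le> max 0 (x - real N)" by simp
  ultimately show ?thesis unfolding reparam_def by linarith
qed

lemma reparam_tail: "real N \<le> x \<Longrightarrow> reparam g N x = real (g N) + (x - real N)"
  using sum_ramps_full[of N x g] by (simp add: reparam_def)

lemma reparam_between:
  assumes "j < N" "real j \<le> s" "s \<le> real j + 1"
  shows "real (g j) \<le> reparam g N s" "reparam g N s \<le> real (g (Suc j))"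
proof -
  have fs: "reparam g N s = real (g j) + (real (g (Suc j)) - real (g j)) * (s - real j)"
    using sum_ramps_mid[OF assms] assms by (simp add: reparam_def)
  have gj: "real (g j) \<le> real (g (Suc j))" using g_mono assms(1) by simp
  show "real (g j) \<le> reparam g N s" using fs gj assms(2) by simp
  have "(real (g (Suc j)) - real (g j)) * (s - real j) \<le> (real (g (Suc j)) - real (g j)) * 1"
    using gj assms(3) by (intro mult_left_mono) linarith+
  then show "reparam g N s \<le> real (g (Suc j))" using fs by simp
qed

end

lemma async_fellow_travel_matching:
  fixes w u :: "letter list" and g :: "nat \<Rightarrow> nat" and C :: real
  assumes w: "w \<in> lists (alphabet k)" and u: "u \<in> lists (alphabet k)"
    and gN: "g (length w) = length u" and gm: "\<forall>j < length w. g j \<le> g (Suc j)"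
    and gd: "\<forall>j < length w. \<forall>r. g j \<le> r \<and> r \<le> g (Suc j) \<longrightarrow> dword k ns (take j w) (take r u) \<le> C"
    and e: "dword k ns w u \<le> C"
  shows "async_fellow_travel k ns (C + 4) w u"
  unfolding async_fellow_travel_def
proof (intro exI conjI allI impI)
  let ?N = "length w" and ?f = "reparam g (length w)"
  show "?f ` {0..} \<subseteq> {0..}" using reparam_nonneg[OF gm] by auto
  show "mono_on {0..} ?f" by (intro mono_onI reparam_mono[OF gm])
  show "continuous_on {0..} ?f" by (rule reparam_cont)
  show "proper_map (top_of_set {0..}) (top_of_set {0..}) ?f"
    by (rule proper_map_if_ge_shift[where T = "real ?N"])
      (use reparam_nonneg[OF gm] reparam_ge[OF gm] reparam_cont in auto)
  fix s :: real assume s0: "0 \<le> s"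
  show "cdist k ns (wpath w s) (wpath u (?f s)) \<le> C + 4"
  proof (cases "real ?N \<le> s")
    case True
    then have "wpath u (?f s) = (u, Ga, 0)" using reparam_tail[OF gm True] gN by (simp add: wpath_end)
    moreover have "wpath w s = (w, Ga, 0)" using True by (simp add: wpath_end)
    ultimately show ?thesis using cdist_le[of k ns w Ga 0 u Ga 0] e by simp
  next
    case False
    let ?j = "nat \<lfloor>s\<rfloor>" and ?r = "nat \<lfloor>?f s\<rfloor>"
    have js: "real ?j \<le> s" "s \<le> real ?j + 1" using s0 by linarith+
    have jN: "?j < ?N" using False s0 by linarith
    note fl = reparam_between[OF gm jN js]
    have "g ?j \<le> ?r" "?r \<le> g (Suc ?j)" using fl by linarith+
    then have dm: "dword k ns (take ?j w) (take ?r u) \<le> C" using gd jN by blast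
    have f0: "0 \<le> ?f s" by (rule reparam_nonneg[OF gm])
    obtain Pw a \<theta> where Pw: "wpath w s = (Pw, a, \<theta>)" "0 \<le> \<theta>" "\<theta> \<le> 1" "Pw \<in> lists (alphabet k)"
      and dPw: "dword k ns Pw (take ?j w) \<le> 1"
      by (rule wpath_near_prefix[OF w s0])
    obtain Pu b \<eta> where Pu: "wpath u (?f s) = (Pu, b, \<eta>)" "0 \<le> \<eta>" "\<eta> \<le> 1" "Pu \<in> lists (alphabet k)"
      and dPu: "dword k ns (take ?r u) Pu \<le> 1"
      by (rule wpath_near_prefix[OF u f0])
    have "dword k ns Pw Pu \<le> dword k ns Pw (take ?j w) + dword k ns (take ?j w) Pu"
      by (rule dword_triangle) (use Pw Pu take_in_lists[OF w] in auto)
    also have "dword k ns (take ?j w) Pu \<le> dword k ns (take ?j w) (take ?r u) + dword k ns (take ?r u) Pu"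
      by (rule dword_triangle) (use Pw Pu take_in_lists[OF w] take_in_lists[OF u] in auto)
    finally have "dword k ns Pw Pu \<le> C + 2" using dPw dPu dm by simp
    then show ?thesis using cdist_le[of k ns Pw a \<theta> Pu b \<eta>] Pw Pu by simp
  qed
qed

text \<open>A list of blocks cuts w = fst_word bs and u = snd_word bs into corresponding pieces;
  block_match sends a position of w inside a block to the same offset (capped at the block
  length) in the corresponding block of u.\<close>
type_synonym block = "letter list \<times> letter list"

fun block_match :: "block list \<Rightarrow> nat \<Rightarrow> nat" where
  "block_match [] j = 0"
| "block_match (b # bs) j = (if j < length (fst b) then min j (length (snd b)) else length (snd b) + block_match bs (j - length (fst b)))"

abbreviation fst_word :: "block list \<Rightarrow> letter list" where "fst_word bs \<equiv> concat (map fst bs)"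
abbreviation snd_word :: "block list \<Rightarrow> letter list" where "snd_word bs \<equiv> concat (map snd bs)"

definition anchored :: "nat \<Rightarrow> (nat \<Rightarrow> int) \<Rightarrow> real \<Rightarrow> letter list \<Rightarrow> letter list \<Rightarrow> block list \<Rightarrow> bool" where
  "anchored k ns C P Q bs \<longleftrightarrow> (\<forall>i \<le> length bs. dword k ns (P @ fst_word (take i bs)) (Q @ snd_word (take i bs)) \<le> C)"

definition blocks_over :: "nat \<Rightarrow> block list \<Rightarrow> bool" where
  "blocks_over k bs \<longleftrightarrow> (\<forall>b \<in> set bs. fst b \<in> lists (alphabet k) \<and> snd b \<in> lists (alphabet k))"

lemma blocks_over_Cons[simp]: "blocks_over k (b # bs) \<longleftrightarrow> fst b \<in> lists (alphabet k) \<and> snd b \<in> lists (alphabet k) \<and> blocks_over k bs"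
  by (auto simp: blocks_over_def)
lemma blocks_over_fst_word: "blocks_over k bs \<Longrightarrow> fst_word bs \<in> lists (alphabet k)"
  by (induction bs) auto
lemma blocks_over_snd_word: "blocks_over k bs \<Longrightarrow> snd_word bs \<in> lists (alphabet k)"
  by (induction bs) auto

lemma block_match_end: "block_match bs (length (fst_word bs)) = length (snd_word bs)"
  by (induction bs) auto

lemma block_match_mono: "j < length (fst_word bs) \<Longrightarrow> block_match bs j \<le> block_match bs (Suc j)"
proof (induction bs arbitrary: j)
  case (Cons b bs)
  show ?case
  proof (cases "j < length (fst b)")
    case True then show ?thesis by auto
  next
    case False
    then have "j - length (fst b) < length (fst_word bs)" using Cons.prems by auto
    then have "block_match bs (j - length (fst b)) \<le> block_match bs (Suc (j - length (fst b)))" by (rule Cons.IH)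
    moreover have "Suc j - length (fst b) = Suc (j - length (fst b))" using False by simp
    ultimately show ?thesis using False by simp
  qed
qed simp

lemma anchored_Cons: "anchored k ns C P Q (b # bs) \<longleftrightarrow> dword k ns P Q \<le> C \<and> anchored k ns C (P @ fst b) (Q @ snd b) bs"
proof
  assume a: "anchored k ns C P Q (b # bs)"
  have "dword k ns P Q \<le> C" using a[unfolded anchored_def, rule_format, of 0] by simp
  moreover have "anchored k ns C (P @ fst b) (Q @ snd b) bs"
    unfolding anchored_def using a[unfolded anchored_def] by (auto dest: spec[of _ "Suc _"])
  ultimately show "dword k ns P Q \<le> C \<and> anchored k ns C (P @ fst b) (Q @ snd b) bs" ..
next
  assume a: "dword k ns P Q \<le> C \<and> anchored k ns C (P @ fst b) (Q @ snd b) bs"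
  show "anchored k ns C P Q (b # bs)" unfolding anchored_def
  proof (intro allI impI)
    fix i assume "i \<le> length (b # bs)"
    then show "dword k ns (P @ fst_word (take i (b # bs))) (Q @ snd_word (take i (b # bs))) \<le> C"
      using a unfolding anchored_def by (cases i) auto
  qed
qed

lemma anchored_Nil: "anchored k ns C P Q [] \<longleftrightarrow> dword k ns P Q \<le> C"
  by (simp add: anchored_def)

lemma anchored_append: "anchored k ns C P Q bs1 \<Longrightarrow> anchored k ns C (P @ fst_word bs1) (Q @ snd_word bs1) bs2 \<Longrightarrow> anchored k ns C P Q (bs1 @ bs2)"
  by (induction bs1 arbitrary: P Q) (auto simp: anchored_Cons anchored_Nil)

lemma dword_block_start:
  assumes "anchored k ns C P Q bs" "blocks_over k bs" "P \<in> lists (alphabet k)" "Q \<in> lists (alphabet k)"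
    "\<forall>b\<in>set bs. length (snd b) \<le> D" "r \<le> block_match bs 0"
  shows "dword k ns P (Q @ take r (snd_word bs)) \<le> C + real D"
  using assms
proof (induction bs arbitrary: P Q r)
  case Nil then show ?case by (simp add: anchored_Nil)
next
  case (Cons b bs)
  have dPQ: "dword k ns P Q \<le> C" and an: "anchored k ns C (P @ fst b) (Q @ snd b) bs"
    using Cons.prems(1) by (auto simp: anchored_Cons)
  have sb: "snd b \<in> lists (alphabet k)" "fst b \<in> lists (alphabet k)" using Cons.prems(2) by auto
  show ?case
  proof (cases "0 < length (fst b)")
    case True
    then have "r = 0" using Cons.prems(6) by simp
    then show ?thesis using dPQ by simp
  next
    case False
    then have fb: "fst b = []" by simp
    show ?thesis
    proof (cases "r \<le> length (snd b)")
      case True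
      have tk: "take r (snd b) \<in> lists (alphabet k)" using take_in_lists[OF sb(1)] .
      have "dword k ns P (Q @ take r (snd b)) \<le> dword k ns P Q + dword k ns Q (Q @ take r (snd b))"
        by (rule dword_triangle) (use Cons.prems tk in auto)
      also have "\<dots> \<le> C + real r" using dPQ dword_append_le[OF tk, of ns Q] True by simp
      also have "\<dots> \<le> C + real D" using True Cons.prems(5) by simp
      finally show ?thesis using True by simp
    next
      case F: False
      have "r - length (snd b) \<le> block_match bs 0" using Cons.prems(6) fb F by simp
      then have "dword k ns (P @ fst b) ((Q @ snd b) @ take (r - length (snd b)) (snd_word bs)) \<le> C + real D"
        using Cons.IH[OF an] Cons.prems sb by auto
      then show ?thesis using F fb by simp
    qed
  qed
qed

lemma dword_block_match_head:
  assumes an: "anchored k ns C P Q (b # bs)" and ok: "blocks_over k (b # bs)"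
    and PQ: "P \<in> lists (alphabet k)" "Q \<in> lists (alphabet k)"
    and D: "\<forall>b'\<in>set (b # bs). length (fst b') \<le> D \<and> length (snd b') \<le> D"
    and j: "j < length (fst b)" and r: "block_match (b # bs) j \<le> r" "r \<le> block_match (b # bs) (Suc j)"
  shows "dword k ns (P @ take j (fst_word (b # bs))) (Q @ take r (snd_word (b # bs))) \<le> C + 2 * real D + 1"
proof -
  have dPQ: "dword k ns P Q \<le> C" and an': "anchored k ns C (P @ fst b) (Q @ snd b) bs"
    using an by (auto simp: anchored_Cons)
  have sb: "snd b \<in> lists (alphabet k)" "fst b \<in> lists (alphabet k)" and ob: "blocks_over k bs"
    using ok by auto
  have Db: "length (fst b) \<le> D" "length (snd b) \<le> D" using D by auto
  have tj: "take j (fst_word (b # bs)) = take j (fst b)" using j by simp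
  have t1: "take j (fst b) \<in> lists (alphabet k)" using take_in_lists sb by auto
  show ?thesis
  proof (cases "r \<le> length (snd b)")
    case True
    have tr: "take r (snd_word (b # bs)) = take r (snd b)" using True by simp
    have t2: "take r (snd b) \<in> lists (alphabet k)" using take_in_lists sb by auto
    have "dword k ns (P @ take j (fst b)) (Q @ take r (snd b))
          \<le> dword k ns (P @ take j (fst b)) P + dword k ns P (Q @ take r (snd b))"
      by (rule dword_triangle) (use PQ t1 t2 in auto)
    also have "dword k ns P (Q @ take r (snd b)) \<le> dword k ns P Q + dword k ns Q (Q @ take r (snd b))"
      by (rule dword_triangle) (use PQ t2 in auto)
    finally have "dword k ns (P @ take j (fst b)) (Q @ take r (snd b)) \<le> real j + C + real r"
      using dPQ dword_append_le[OF t2, of ns Q] dword_append_le'[OF t1, of ns P] j by simp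
    moreover have "real j + real r \<le> 2 * real D" using j True Db by simp
    ultimately show ?thesis unfolding tj tr by linarith
  next
    case False
    text \<open>Then j is the last position of the block, and r lies beyond the block in u.\<close>
    have sj: "Suc j = length (fst b)"
    proof (rule ccontr)
      assume "Suc j \<noteq> length (fst b)"
      then have "block_match (b # bs) (Suc j) \<le> length (snd b)" using j by simp
      then show False using False r(2) by simp
    qed
    have fbj: "fst b = take j (fst b) @ [fst b ! j]" using sj
      by (metis lessI take_Suc_conv_app_nth take_all order.refl)
    have tr: "take r (snd_word (b # bs)) = snd b @ take (r - length (snd b)) (snd_word bs)" using False by simp
    have "r - length (snd b) \<le> block_match bs 0" using r(2) sj by simp
    then have a1: "dword k ns (P @ fst b) ((Q @ snd b) @ take (r - length (snd b)) (snd_word bs)) \<le> C + real D"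
      by (intro dword_block_start[OF an' ob]) (use PQ sb D ok in auto)
    have lj: "[fst b ! j] \<in> lists (alphabet k)" using sb(2) fbj by (metis Cons_in_lists_iff append_in_lists_conv)
    have "(P @ take j (fst b)) @ [fst b ! j] = P @ fst b" using fbj by (metis append.assoc)
    then have d1: "dword k ns (P @ take j (fst b)) (P @ fst b) \<le> 1"
      using dword_append_le[OF lj, of ns "P @ take j (fst b)"] by simp
    have "dword k ns (P @ take j (fst b)) ((Q @ snd b) @ take (r - length (snd b)) (snd_word bs))
          \<le> dword k ns (P @ take j (fst b)) (P @ fst b)
             + dword k ns (P @ fst b) ((Q @ snd b) @ take (r - length (snd b)) (snd_word bs))"
      by (rule dword_triangle) (use PQ t1 sb take_in_lists[OF blocks_over_snd_word[OF ob]] in auto)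
    then show ?thesis unfolding tj tr using d1 a1 by simp
  qed
qed

lemma dword_block_match:
  assumes "anchored k ns C P Q bs" "blocks_over k bs" "P \<in> lists (alphabet k)" "Q \<in> lists (alphabet k)"
    "\<forall>b\<in>set bs. length (fst b) \<le> D \<and> length (snd b) \<le> D"
    "j < length (fst_word bs)" "block_match bs j \<le> r" "r \<le> block_match bs (Suc j)"
  shows "dword k ns (P @ take j (fst_word bs)) (Q @ take r (snd_word bs)) \<le> C + 2 * real D + 1"
  using assms
proof (induction bs arbitrary: P Q j r)
  case (Cons b bs)
  show ?case
  proof (cases "j < length (fst b)")
    case True
    show ?thesis by (rule dword_block_match_head[OF Cons.prems(1-5) True Cons.prems(7,8)])
  next
    case False
    have an: "anchored k ns C (P @ fst b) (Q @ snd b) bs" using Cons.prems(1) by (auto simp: anchored_Cons)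
    have tj: "take j (fst_word (b # bs)) = fst b @ take (j - length (fst b)) (fst_word bs)" using False by simp
    have g1: "block_match (b # bs) j = length (snd b) + block_match bs (j - length (fst b))" using False by simp
    have g2: "block_match (b # bs) (Suc j) = length (snd b) + block_match bs (Suc (j - length (fst b)))"
      using False by (simp add: Suc_diff_le)
    have rs: "length (snd b) \<le> r" using g1 Cons.prems(7) by simp
    have tr: "take r (snd_word (b # bs)) = snd b @ take (r - length (snd b)) (snd_word bs)" using rs by simp
    have "dword k ns ((P @ fst b) @ take (j - length (fst b)) (fst_word bs))
        ((Q @ snd b) @ take (r - length (snd b)) (snd_word bs)) \<le> C + 2 * real D + 1"
      by (rule Cons.IH[OF an]) (use Cons.prems g1 g2 rs False in auto)
    then show ?thesis unfolding tj tr by simp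
  qed
qed simp

lemma async_fellow_travel_blocks:
  assumes an: "anchored k ns C [] [] bs" and ok: "blocks_over k bs"
    and D: "\<forall>b\<in>set bs. length (fst b) \<le> D \<and> length (snd b) \<le> D"
  shows "async_fellow_travel k ns (C + 2 * real D + 1 + 4) (fst_word bs) (snd_word bs)"
proof (rule async_fellow_travel_matching)
  show "fst_word bs \<in> lists (alphabet k)" "snd_word bs \<in> lists (alphabet k)" using blocks_over_fst_word blocks_over_snd_word ok by auto
  show "block_match bs (length (fst_word bs)) = length (snd_word bs)" by (rule block_match_end)
  show "\<forall>j<length (fst_word bs). block_match bs j \<le> block_match bs (Suc j)" using block_match_mono by blast
  show "\<forall>j<length (fst_word bs). \<forall>r. block_match bs j \<le> r \<and> r \<le> block_match bs (Suc j) \<longrightarrow>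
          dword k ns (take j (fst_word bs)) (take r (snd_word bs)) \<le> C + 2 * real D + 1"
    using dword_block_match[OF an ok _ _ D] by auto
  have "dword k ns (fst_word bs) (snd_word bs) \<le> C" using an unfolding anchored_def by (auto dest: spec[of _ "length bs"])
  then show "dword k ns (fst_word bs) (snd_word bs) \<le> C + 2 * real D + 1" by simp
qed

definition common_exp :: "int \<Rightarrow> int \<Rightarrow> int" where
  "common_exp c c' = (if 0 < c \<and> 0 < c' then min c c' else if c < 0 \<and> c' < 0 then max c c' else 0)"

text \<open>Blocks matching g^c with g^{c'}: one letter at a time along the common part, then the
  remaining powers as one block.\<close>
definition pow_blocks :: "gen \<Rightarrow> int \<Rightarrow> int \<Rightarrow> block list" where
  "pow_blocks g c c' = replicate (nat \<bar>common_exp c c'\<bar>) ([(g, common_exp c c' < 0)], [(g, common_exp c c' < 0)])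
     @ [(gpow g (c - common_exp c c'), gpow g (c' - common_exp c c'))]"

lemma gpow_split: "(0 \<le> p \<and> p \<le> c) \<or> (c \<le> p \<and> p \<le> 0) \<Longrightarrow> gpow g c = gpow g p @ gpow g (c - p)"
proof -
  assume h: "(0 \<le> p \<and> p \<le> c) \<or> (c \<le> p \<and> p \<le> 0)"
  then show ?thesis
  proof
    assume a: "0 \<le> p \<and> p \<le> c"
    then have "nat c = nat p + nat (c - p)" by linarith
    then show ?thesis using a by (simp add: gpow_def replicate_add)
  next
    assume a: "c \<le> p \<and> p \<le> 0"
    then have "nat (- c) = nat (- p) + nat (- (c - p))" by linarith
    then show ?thesis using a by (auto simp: gpow_def replicate_add)
  qed
qed

lemma concat_replicate_singletons: "concat (map fst (replicate n ([y], [y]))) = replicate n y"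
  "concat (map snd (replicate n ([y], [y]))) = replicate n y"
  by (induction n) auto

lemma replicate_eq_gpow: "replicate (nat \<bar>p\<bar>) (g, p < 0) = gpow g p"
  by (simp add: gpow_def)

lemma common_exp_between: "(0 \<le> common_exp c c' \<and> common_exp c c' \<le> c) \<or> (c \<le> common_exp c c' \<and> common_exp c c' \<le> 0)"
  "(0 \<le> common_exp c c' \<and> common_exp c c' \<le> c') \<or> (c' \<le> common_exp c c' \<and> common_exp c c' \<le> 0)"
  by (auto simp: common_exp_def)

lemma fst_word_pow_blocks: "fst_word (pow_blocks g c c') = gpow g c"
  using gpow_split[OF common_exp_between(1)[of c c'], where g=g] by (simp add: pow_blocks_def concat_replicate_singletons replicate_eq_gpow)

lemma snd_word_pow_blocks: "snd_word (pow_blocks g c c') = gpow g c'"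
  using gpow_split[OF common_exp_between(2)[of c c'], where g=g] by (simp add: pow_blocks_def concat_replicate_singletons replicate_eq_gpow)

lemma length_gpow[simp]: "length (gpow g c) = nat \<bar>c\<bar>"
  by (simp add: gpow_def)

lemma pow_blocks_len: "b \<in> set (pow_blocks g c c') \<Longrightarrow> length (fst b) \<le> max 1 (nat \<bar>c - c'\<bar>) \<and> length (snd b) \<le> max 1 (nat \<bar>c - c'\<bar>)"
  by (auto simp: pow_blocks_def common_exp_def split: if_splits)

lemma gpow_in_lists: "g \<in> gens k \<Longrightarrow> gpow g c \<in> lists (alphabet k)"
  by (auto simp: gpow_def alphabet_def)

lemma Ga_gens[simp]: "Ga \<in> gens k" and Gt_gens[simp]: "Gt \<in> gens k"
  by (auto simp: gens_def)

lemma blocks_over_pow_blocks: "g \<in> gens k \<Longrightarrow> blocks_over k (pow_blocks g c c')"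
  by (auto simp: blocks_over_def pow_blocks_def alphabet_def gpow_def)

lemma anchored_rep:
  "(\<forall>i \<le> n. dword k ns (P @ replicate i y) (Q @ replicate i y) \<le> C) \<Longrightarrow> anchored k ns C P Q (replicate n ([y], [y]))"
proof (induction n arbitrary: P Q)
  case 0 then show ?case by (auto simp: anchored_Nil)
next
  case (Suc n)
  have "dword k ns P Q \<le> C" using Suc.prems[rule_format, of 0] by simp
  moreover have "anchored k ns C (P @ [y]) (Q @ [y]) (replicate n ([y], [y]))"
  proof (rule Suc.IH, intro allI impI)
    fix i assume "i \<le> n"
    then show "dword k ns ((P @ [y]) @ replicate i y) ((Q @ [y]) @ replicate i y) \<le> C"
      using Suc.prems[rule_format, of "Suc i"] by (simp add: replicate_append_same[symmetric])
  qed
  ultimately show ?case by (simp add: anchored_Cons)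
qed

lemma anchored_pow_blocks:
  assumes "\<forall>x. dword k ns (P @ gpow g x) (Q @ gpow g x) \<le> C"
    and "dword k ns (P @ gpow g c) (Q @ gpow g c') \<le> C"
  shows "anchored k ns C P Q (pow_blocks g c c')"
  unfolding pow_blocks_def
proof (rule anchored_append)
  let ?p = "common_exp c c'"
  show "anchored k ns C P Q (replicate (nat \<bar>?p\<bar>) ([(g, ?p < 0)], [(g, ?p < 0)]))"
  proof (rule anchored_rep, intro allI impI)
    fix i assume "i \<le> nat \<bar>?p\<bar>"
    have "replicate i (g, ?p < 0) = gpow g (if ?p < 0 then - int i else int i)" by (simp add: gpow_def)
    then show "dword k ns (P @ replicate i (g, ?p < 0)) (Q @ replicate i (g, ?p < 0)) \<le> C" using assms(1) by simp
  qed
  have e1: "gpow g ?p @ gpow g (c - ?p) = gpow g c" using gpow_split[OF common_exp_between(1)[of c c'], where g=g] by simp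
  have e2: "gpow g ?p @ gpow g (c' - ?p) = gpow g c'" using gpow_split[OF common_exp_between(2)[of c c'], where g=g] by simp
  show "anchored k ns C (P @ fst_word (replicate (nat \<bar>?p\<bar>) ([(g, ?p < 0)], [(g, ?p < 0)])))
     (Q @ snd_word (replicate (nat \<bar>?p\<bar>) ([(g, ?p < 0)], [(g, ?p < 0)])))
     [(gpow g (c - ?p), gpow g (c' - ?p))]"
    using assms(1)[rule_format, of ?p] assms(2) e1 e2
    by (simp add: concat_replicate_singletons replicate_eq_gpow anchored_Cons anchored_Nil)
qed

definition b_bound :: "nat \<Rightarrow> (nat \<Rightarrow> int) \<Rightarrow> int" where "b_bound k ns = (\<Sum>i\<in>{1..k}. \<bar>ns i\<bar>)"

lemma b_bound_nonneg: "0 \<le> b_bound k ns" by (simp add: b_bound_def sum_nonneg)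

lemma anchored_pow_blocks_shifted:
  assumes "\<And>x x'. dword k ns (P @ gpow g x) (Q @ gpow g x') \<le> 1 + real_of_int \<bar>x' - x - sh\<bar>"
    and "\<bar>sh\<bar> \<le> B" and "\<bar>c' - c - sh\<bar> \<le> B"
  shows "anchored k ns (1 + real_of_int B) P Q (pow_blocks g c c')"
proof (rule anchored_pow_blocks)
  show "\<forall>x. dword k ns (P @ gpow g x) (Q @ gpow g x) \<le> 1 + real_of_int B"
    using assms(1,2) by (smt (verit) of_int_le_iff)
  show "dword k ns (P @ gpow g c) (Q @ gpow g c') \<le> 1 + real_of_int B"
    using assms(1)[of c c'] assms(3) by (smt (verit) of_int_le_iff)
qed

lemma b_exponent_le: "b_letter_of k s \<Longrightarrow> \<bar>b_exponent ns s\<bar> \<le> b_bound k ns"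
proof -
  assume "b_letter_of k s"
  then obtain i e where s: "s = (Gb i, e)" and i: "i \<in> {1..k}" by (auto simp: b_letter_of_def) (metis prod.collapse)
  have "\<bar>ns i\<bar> \<le> (\<Sum>i\<in>{1..k}. \<bar>ns i\<bar>)" by (rule member_le_sum) (use i in auto)
  then show ?thesis by (simp add: s b_bound_def)
qed

lemma abs_mult_unit: "d \<in> {1, -1} \<Longrightarrow> \<bar>d * x\<bar> = \<bar>x :: int\<bar>" by (auto simp: abs_mult)

lemma post_exp_le: "d \<in> {1, -1} \<Longrightarrow> b_letter_of k s \<Longrightarrow> \<bar>post_exp ns d s\<bar> \<le> b_bound k ns"
  using b_exponent_le[of k s ns] abs_mult_unit[of d "b_exponent ns s"] b_bound_nonneg[of k ns] by (auto simp: post_exp_def)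
lemma pre_exp_le: "d \<in> {1, -1} \<Longrightarrow> b_letter_of k s \<Longrightarrow> \<bar>pre_exp ns d s\<bar> \<le> b_bound k ns"
  using b_exponent_le[of k s ns] abs_mult_unit[of d "b_exponent ns s"] b_bound_nonneg[of k ns] by (auto simp: pre_exp_def)
lemma carry_le: "d \<in> {1, -1} \<Longrightarrow> \<forall>x\<in>set r. b_letter_of k (fst x) \<Longrightarrow> \<bar>carry ns d 0 r\<bar> \<le> b_bound k ns"
  using b_bound_nonneg[of k ns] pre_exp_le by (cases r) (auto simp: carry_def)

abbreviation t_letter :: "int \<Rightarrow> letter" where "t_letter d \<equiv> (Gt, 0 < d)"

lemma nf_step_t_letter: "d \<in> {1, -1} \<Longrightarrow> nf_step ns (m, p) (t_letter d) = (m - d, twist ns d p)"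
  by auto

lemma t_letter_in_lists: "t_letter d \<in> alphabet k" by (simp add: alphabet_def)

lemma b_letter_of_in_lists: "b_letter_of k s \<Longrightarrow> s \<in> alphabet k"
  by (auto simp: b_letter_of_def alphabet_iff)

lemma dword_twist_le:
  assumes d: "d \<in> {1, -1}" and PQ: "P \<in> lists (alphabet k)" "Q \<in> lists (alphabet k)"
    and eP: "nf_run ns (0, 0, []) P = (m, p)" and eQ: "nf_run ns (0, 0, []) Q = (m - d, append_a_pow e (twist ns d p))"
  shows "dword k ns P Q \<le> 1 + real_of_int \<bar>e\<bar>"
proof -
  let ?z = "[t_letter d] @ gpow Ga e"
  have z: "?z \<in> lists (alphabet k)" using t_letter_in_lists gpow_in_lists[of Ga k e] by auto
  have "nf_run ns (0, 0, []) (P @ ?z) = (m - d, append_a_pow e (twist ns d p))"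
    using eP nf_step_t_letter[OF d] by (simp add: nf_run_gpow_a)
  then have "dword k ns P Q \<le> real (length ?z)" using dword_le_if_nf_run_eq[OF PQ z] eQ by simp
  then show ?thesis by simp
qed

lemma twist_syls_carry_in: "pre \<noteq> [] \<Longrightarrow> twist_syls ns d e pre = add_last_exp e (twist_syls ns d 0 pre)"
  using twist_syls_twist_syls[of ns 0 e d 0 pre] twist_syls_zero[of ns e "twist_syls ns d 0 pre"] by simp

definition syllable_blocks :: "syllable \<times> syllable \<Rightarrow> block list" where
  "syllable_blocks yy = ([fst (fst yy)], [fst (fst yy)]) # pow_blocks Ga (snd (fst yy)) (snd (snd yy))"

lemma carry_append_Cons: "carry ns d 0 (pre @ y # rest) = (if pre = [] then pre_exp ns d (fst y) else carry ns d 0 pre)"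
  by (cases pre) (auto simp: carry_def)

lemma freely_reduced_append_left: "freely_reduced (A @ B) \<Longrightarrow> freely_reduced A"
proof (induction B rule: rev_induct)
  case (snoc z B)
  then show ?case using freely_reduced_snoc[of "A @ B" z] by simp
qed simp

lemma nf_run_b_letter_a_pow: "is_b_letter s \<Longrightarrow> \<not> (r \<noteq> [] \<and> last r = (inv_letter s, 0)) \<Longrightarrow>
   nf_run ns (m, c, r) (s # gpow Ga x) = (m, c, r @ [(s, x)])"
proof -
  assume ib: "is_b_letter s" and nl: "\<not> (r \<noteq> [] \<and> last r = (inv_letter s, 0))"
  obtain i e where s: "s = (Gb i, e)" using ib by (cases s; cases "fst s") auto
  have "nf_step ns (m, c, r) s = (m, append_b s (c, r))" by (simp add: s)
  then have "nf_step ns (m, c, r) s = (m, c, r @ [(s, 0)])" using append_b_app[OF nl] by simp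
  then show ?thesis by (simp add: nf_run_gpow_a append_a_pow_def add_last_exp_def)
qed

lemma twist_syls_last_not_inverse:
  assumes "freely_reduced (pre @ [(s, c)])"
  shows "\<not> (twist_syls ns d (pre_exp ns d s) pre \<noteq> [] \<and> last (twist_syls ns d (pre_exp ns d s) pre) = (inv_letter s, 0))"
proof
  let ?pre' = "twist_syls ns d (pre_exp ns d s) pre"
  assume a: "?pre' \<noteq> [] \<and> last ?pre' = (inv_letter s, 0)"
  then have pn: "pre \<noteq> []" by simp
  have l: "last ?pre' = (fst (last pre), snd (last pre) + post_exp ns d (fst (last pre)) + pre_exp ns d s)"
    by (rule last_twist_syls[OF pn])
  then have f: "fst (last pre) = inv_letter s" using a by simp
  have "post_exp ns d (inv_letter s) + pre_exp ns d s = 0" using post_exp_pre_exp_inv[of ns d "inv_letter s"] by simp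
  then have "snd (last pre) = 0" using a l f by simp
  then show False using assms pn f by (simp add: freely_reduced_snoc)
qed

lemma append_a_pow_pre_exp_twist:
  "append_a_pow (pre_exp ns d s) (twist ns d (c0, pre))
     = (c0 + carry ns d 0 (pre @ (s, c) # rest), twist_syls ns d (pre_exp ns d s) pre)"
proof (cases "pre = []")
  case False
  then show ?thesis
    by (simp add: twist_def append_a_pow_def carry_append_Cons twist_syls_carry_in[OF False, of ns d "pre_exp ns d s"])
qed (simp add: twist_def append_a_pow_def carry_def)

text \<open>Induction over the syllables still to be matched: P and Q are words for the parts of the
  two normal forms in front of them, the second being the t-twist of the first.\<close>
lemma anchored_syllable_blocks:
  assumes d: "d \<in> {1, -1}" and v: "reduced (c0, pre @ rest)" and ok: "b_letters_of k (c0, pre @ rest)"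
    and PQ: "P \<in> lists (alphabet k)" "Q \<in> lists (alphabet k)"
    and eP: "nf_run ns (0, 0, []) P = (m, c0, pre)"
    and eQ: "nf_run ns (0, 0, []) Q = (m - d, c0 + carry ns d 0 (pre @ rest), twist_syls ns d (carry ns d 0 rest) pre)"
  shows "anchored k ns (1 + real_of_int (b_bound k ns)) P Q (concat (map syllable_blocks (zip rest (twist_syls ns d 0 rest))))"
  using v ok PQ eP eQ
proof (induction rest arbitrary: pre P Q)
  case Nil
  have "nf_run ns (0, 0, []) Q = (m - d, append_a_pow 0 (twist ns d (c0, pre)))"
    using Nil.prems(6) by (simp add: twist_def)
  then have "dword k ns P Q \<le> 1 + real_of_int \<bar>0\<bar>" by (rule dword_twist_le[OF d Nil.prems(3,4,5)])
  then show ?case using b_bound_nonneg[of k ns] by (simp add: anchored_Nil)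
next
  case (Cons y rest)
  obtain s c where y: "y = (s, c)" by (cases y)
  let ?B = "real_of_int (b_bound k ns)"
  let ?c' = "c + post_exp ns d s + carry ns d 0 rest"
  let ?c0' = "c0 + carry ns d 0 (pre @ y # rest)"
  let ?pre' = "twist_syls ns d (pre_exp ns d s) pre"
  have oks: "b_letter_of k s" using Cons.prems(2) y by (simp add: b_letters_of_def)
  have okr: "\<forall>x\<in>set (pre @ y # rest). b_letter_of k (fst x)" using Cons.prems(2) by (simp add: b_letters_of_def)
  have okrest: "\<forall>x\<in>set rest. b_letter_of k (fst x)" using okr by simp
  have ib: "is_b_letter s" using Cons.prems(1) y by (simp add: reduced_def)
  have sal: "s \<in> alphabet k" using b_letter_of_in_lists[OF oks] .
  have noc1: "freely_reduced (pre @ [(s, c)])"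
    using Cons.prems(1) freely_reduced_append_left[of "pre @ [y]" rest] by (simp add: reduced_def y)
  then have nlP: "\<not> (pre \<noteq> [] \<and> last pre = (inv_letter s, 0))" by (auto simp: freely_reduced_snoc)
  note nlQ = twist_syls_last_not_inverse[OF noc1, of ns d]
  have hy: "carry ns d 0 (y # rest) = pre_exp ns d s" by (simp add: carry_def y)
  have eQ': "nf_run ns (0, 0, []) Q = (m - d, ?c0', ?pre')" using Cons.prems(6) hy by simp
  have ePx: "nf_run ns (0, 0, []) (P @ s # gpow Ga x) = (m, c0, pre @ [(s, x)])" for x
    using Cons.prems(5) nf_run_b_letter_a_pow[OF ib nlP] by simp
  have eQx: "nf_run ns (0, 0, []) (Q @ s # gpow Ga x) = (m - d, ?c0', ?pre' @ [(s, x)])" for x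
    using eQ' nf_run_b_letter_a_pow[OF ib nlQ] by simp
  have tw: "twist ns d (c0, pre @ [(s, x)]) = (?c0', ?pre' @ [(s, x + post_exp ns d s)])" for x
    by (simp add: twist_def twist_syls_append carry_append_Cons y) (simp add: carry_def)
  have lx: "P @ s # gpow Ga x \<in> lists (alphabet k)" "Q @ s # gpow Ga x \<in> lists (alphabet k)" for x
    using Cons.prems(3,4) sal gpow_in_lists[of Ga k x] by auto
  have ancx: "dword k ns (P @ s # gpow Ga x) (Q @ s # gpow Ga x') \<le> 1 + real_of_int \<bar>x' - x - post_exp ns d s\<bar>" for x x'
  proof (rule dword_twist_le[OF d lx(1) lx(2) ePx])
    show "nf_run ns (0, 0, []) (Q @ s # gpow Ga x') = (m - d, append_a_pow (x' - x - post_exp ns d s) (twist ns d (c0, pre @ [(s, x)])))"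
      using eQx tw by (simp add: append_a_pow_def add_last_exp_def)
  qed
  have "dword k ns P Q \<le> 1 + real_of_int \<bar>pre_exp ns d s\<bar>"
    by (rule dword_twist_le[OF d Cons.prems(3,4,5)]) (use eQ' append_a_pow_pre_exp_twist[of ns d s c0 pre c rest] y in simp)
  then have d0: "dword k ns P Q \<le> 1 + ?B" using pre_exp_le[OF d oks, of ns] by simp
  have ap: "anchored k ns (1 + ?B) (P @ [s]) (Q @ [s]) (pow_blocks Ga c ?c')"
    by (rule anchored_pow_blocks_shifted[where sh = "post_exp ns d s"])
      (use ancx post_exp_le[OF d oks, of ns] carry_le[OF d okrest, of ns] in simp_all)
  have IH: "anchored k ns (1 + ?B) (P @ s # gpow Ga c) (Q @ s # gpow Ga ?c') (concat (map syllable_blocks (zip rest (twist_syls ns d 0 rest))))"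
  proof (rule Cons.IH[of "pre @ [y]"])
    show "reduced (c0, (pre @ [y]) @ rest)" "b_letters_of k (c0, (pre @ [y]) @ rest)" using Cons.prems(1,2) by simp_all
    show "P @ s # gpow Ga c \<in> lists (alphabet k)" "Q @ s # gpow Ga ?c' \<in> lists (alphabet k)" using lx by auto
    show "nf_run ns (0, 0, []) (P @ s # gpow Ga c) = (m, c0, pre @ [y])" using ePx y by simp
    have "twist_syls ns d (carry ns d 0 rest) (pre @ [y]) = ?pre' @ [(s, ?c')]"
      by (simp add: twist_syls_append y carry_def)
    then show "nf_run ns (0, 0, []) (Q @ s # gpow Ga ?c') = (m - d, c0 + carry ns d 0 ((pre @ [y]) @ rest), twist_syls ns d (carry ns d 0 rest) (pre @ [y]))"
      using eQx by simp
  qed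
  have bl: "concat (map syllable_blocks (zip (y # rest) (twist_syls ns d 0 (y # rest))))
      = ([s], [s]) # pow_blocks Ga c ?c' @ concat (map syllable_blocks (zip rest (twist_syls ns d 0 rest)))"
    by (simp add: syllable_blocks_def y)
  have A: "anchored k ns (1 + ?B) (P @ [s]) (Q @ [s]) (pow_blocks Ga c ?c' @ concat (map syllable_blocks (zip rest (twist_syls ns d 0 rest))))"
    by (rule anchored_append[OF ap]) (use IH in \<open>simp add: fst_word_pow_blocks snd_word_pow_blocks\<close>)
  show ?case unfolding bl using d0 A by (simp add: anchored_Cons)
qed

lemma words_syllable_blocks: "length r' = length r \<Longrightarrow> map fst r' = map fst r \<Longrightarrow>
   fst_word (concat (map syllable_blocks (zip r r'))) = concat (map (\<lambda>x. fst x # gpow Ga (snd x)) r) \<and>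
   snd_word (concat (map syllable_blocks (zip r r'))) = concat (map (\<lambda>x. fst x # gpow Ga (snd x)) r')"
proof (induction r arbitrary: r')
  case Nil then show ?case by simp
next
  case (Cons y r)
  then obtain y' r'' where r': "r' = y' # r''" by (cases r') auto
  then show ?case using Cons by (simp add: syllable_blocks_def fst_word_pow_blocks snd_word_pow_blocks)
qed

lemma blocks_over_append: "blocks_over k (A @ B) \<longleftrightarrow> blocks_over k A \<and> blocks_over k B" by (auto simp: blocks_over_def)

lemma blocks_over_syllable_blocks: "\<forall>x\<in>set r. b_letter_of k (fst x) \<Longrightarrow> blocks_over k (concat (map syllable_blocks (zip r r')))"
proof (induction r arbitrary: r')
  case Nil then show ?case by (simp add: blocks_over_def)
next
  case (Cons y r)
  show ?case
  proof (cases r')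
    case Nil then show ?thesis by (simp add: blocks_over_def)
  next
    case (Cons y' r'')
    have "fst y \<in> alphabet k" using Cons.prems b_letter_of_in_lists by simp
    then show ?thesis using Cons.prems Cons.IH[of r''] \<open>r' = y' # r''\<close>
      by (simp add: syllable_blocks_def blocks_over_append blocks_over_pow_blocks)
  qed
qed

lemma length_syllable_blocks: "b \<in> set (concat (map syllable_blocks (zip r r'))) \<Longrightarrow>
   \<forall>p\<in>set (zip r r'). nat \<bar>snd (fst p) - snd (snd p)\<bar> \<le> D' \<Longrightarrow> 1 \<le> D' \<Longrightarrow>
   length (fst b) \<le> D' \<and> length (snd b) \<le> D'"
  by (auto simp: syllable_blocks_def dest!: pow_blocks_len)

lemma nth_twist_syls:
  "i < length r \<Longrightarrow>
   twist_syls ns d e r ! i = (fst (r ! i), snd (r ! i) + post_exp ns d (fst (r ! i)) + carry ns d e (drop (Suc i) r))"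
proof (induction r arbitrary: i)
  case (Cons y r) then show ?case by (cases i) auto
qed simp

lemma twist_syls_exp_diff_le:
  assumes d: "d \<in> {1, -1}" and okr: "\<forall>x\<in>set r. b_letter_of k (fst x)" and p: "p \<in> set (zip r (twist_syls ns d 0 r))"
  shows "\<bar>snd (fst p) - snd (snd p)\<bar> \<le> 2 * b_bound k ns"
proof -
  obtain i where i: "i < length r" "p = (r ! i, twist_syls ns d 0 r ! i)" using p by (auto simp: in_set_zip)
  have "b_letter_of k (fst (r ! i))" using okr i(1) by simp
  moreover have "\<forall>x\<in>set (drop (Suc i) r). b_letter_of k (fst x)" using okr by (meson in_set_dropD)
  ultimately show ?thesis
    using post_exp_le[OF d, of k "fst (r ! i)" ns] carry_le[OF d, of "drop (Suc i) r" k ns] i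
    by (simp add: nth_twist_syls)
qed

definition t_step_blocks :: "(nat \<Rightarrow> int) \<Rightarrow> int \<Rightarrow> int \<Rightarrow> int \<Rightarrow> syllable list \<Rightarrow> block list" where
  "t_step_blocks ns d m c0 r = pow_blocks Gt m (m - d) @ pow_blocks Ga c0 (c0 + carry ns d 0 r)
     @ concat (map syllable_blocks (zip r (twist_syls ns d 0 r)))"

lemma words_t_step_blocks:
  "fst_word (t_step_blocks ns d m c0 r) = nf_word (m, c0, r)"
  "snd_word (t_step_blocks ns d m c0 r) = nf_word (m - d, twist ns d (c0, r))"
  using words_syllable_blocks[of "twist_syls ns d 0 r" r]
  by (simp_all add: t_step_blocks_def fst_word_pow_blocks snd_word_pow_blocks nf_word_def syls_word_def twist_def)

lemma blocks_over_t_step_blocks: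
  "b_letters_of k (c0, r) \<Longrightarrow> blocks_over k (t_step_blocks ns d m c0 r)"
  using blocks_over_syllable_blocks[of r k]
  by (simp add: t_step_blocks_def b_letters_of_def blocks_over_append blocks_over_pow_blocks)

lemma length_t_step_blocks:
  assumes d: "d \<in> {1, -1}" and ok: "b_letters_of k (c0, r)" and b: "b \<in> set (t_step_blocks ns d m c0 r)"
  shows "length (fst b) \<le> nat (2 * b_bound k ns) + 1 \<and> length (snd b) \<le> nat (2 * b_bound k ns) + 1"
proof -
  let ?D = "nat (2 * b_bound k ns) + 1"
  have okr: "\<forall>x\<in>set r. b_letter_of k (fst x)" using ok by (simp add: b_letters_of_def)
  have "b \<in> set (pow_blocks Gt m (m - d)) \<or> b \<in> set (pow_blocks Ga c0 (c0 + carry ns d 0 r))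
      \<or> b \<in> set (concat (map syllable_blocks (zip r (twist_syls ns d 0 r))))"
    using b by (simp add: t_step_blocks_def)
  then show ?thesis
  proof (elim disjE)
    assume "b \<in> set (pow_blocks Gt m (m - d))"
    then show ?thesis using pow_blocks_len[of b Gt m "m - d"] d by auto
  next
    assume "b \<in> set (pow_blocks Ga c0 (c0 + carry ns d 0 r))"
    then have "length (fst b) \<le> max 1 (nat \<bar>carry ns d 0 r\<bar>) \<and> length (snd b) \<le> max 1 (nat \<bar>carry ns d 0 r\<bar>)"
      using pow_blocks_len[of b Ga c0 "c0 + carry ns d 0 r"] by simp
    moreover have "nat \<bar>carry ns d 0 r\<bar> \<le> nat (2 * b_bound k ns)"
      using carry_le[OF d okr, of ns] b_bound_nonneg[of k ns] by (intro nat_mono) linarith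
    ultimately show ?thesis by linarith
  next
    assume "b \<in> set (concat (map syllable_blocks (zip r (twist_syls ns d 0 r))))"
    moreover have "\<forall>p\<in>set (zip r (twist_syls ns d 0 r)). nat \<bar>snd (fst p) - snd (snd p)\<bar> \<le> ?D"
      using twist_syls_exp_diff_le[OF d okr] by fastforce
    ultimately show ?thesis using length_syllable_blocks by simp
  qed
qed

lemma anchored_t_step_blocks:
  assumes d: "d \<in> {1, -1}" and v: "reduced (c0, r)" and ok: "b_letters_of k (c0, r)"
  shows "anchored k ns (1 + real_of_int (b_bound k ns)) [] [] (t_step_blocks ns d m c0 r)"
proof -
  let ?C = "1 + real_of_int (b_bound k ns)" and ?c0' = "c0 + carry ns d 0 r"
  have okr: "\<forall>x\<in>set r. b_letter_of k (fst x)" using ok by (simp add: b_letters_of_def)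
  have B0: "0 \<le> b_bound k ns" by (rule b_bound_nonneg)
  have ev: "nf_run ns (0, 0, []) (gpow Gt j @ gpow Ga x) = (j, x, [])" for j x
    using nf_run_gpow_t[of ns 0 j] by (simp add: nf_run_gpow_a append_a_pow_def)
  have ev_t: "nf_run ns (0, 0, []) (gpow Gt j) = (j, 0, [])" for j using nf_run_gpow_t[of ns 0 j] by simp
  have la: "gpow Gt j @ gpow Ga x \<in> lists (alphabet k)" for j x
    using gpow_in_lists[of Gt k] gpow_in_lists[of Ga k] by auto
  have "dword k ns (gpow Gt m) (gpow Gt (m - d)) \<le> 1 + real_of_int \<bar>0\<bar>"
    by (rule dword_twist_le[OF d gpow_in_lists gpow_in_lists ev_t]) (use ev_t in \<open>simp_all add: twist_def\<close>)
  then have t_part: "anchored k ns ?C [] [] (pow_blocks Gt m (m - d))"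
    by (intro anchored_pow_blocks) (use dword_self B0 in auto)
  have same_a: "dword k ns (gpow Gt m @ gpow Ga x) (gpow Gt (m - d) @ gpow Ga x) \<le> ?C" for x
  proof -
    have "dword k ns (gpow Gt m @ gpow Ga x) (gpow Gt (m - d) @ gpow Ga x) \<le> 1 + real_of_int \<bar>0\<bar>"
      by (rule dword_twist_le[OF d la la ev]) (use ev in \<open>simp add: twist_def append_a_pow_def\<close>)
    then show ?thesis using B0 by simp
  qed
  have "dword k ns (gpow Gt m @ gpow Ga c0) (gpow Gt (m - d) @ gpow Ga ?c0') \<le> 1 + real_of_int \<bar>carry ns d 0 r\<bar>"
    by (rule dword_twist_le[OF d la la ev]) (use ev in \<open>simp add: twist_def append_a_pow_def\<close>)
  then have "anchored k ns ?C (gpow Gt m) (gpow Gt (m - d)) (pow_blocks Ga c0 ?c0')"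
    using carry_le[OF d okr, of ns] same_a by (intro anchored_pow_blocks) auto
  moreover have "anchored k ns ?C (gpow Gt m @ gpow Ga c0) (gpow Gt (m - d) @ gpow Ga ?c0')
      (concat (map syllable_blocks (zip r (twist_syls ns d 0 r))))"
    using anchored_syllable_blocks[OF d, of c0 "[]" r k "gpow Gt m @ gpow Ga c0" "gpow Gt (m - d) @ gpow Ga ?c0'" ns m]
      v ok la ev by simp
  ultimately show ?thesis unfolding t_step_blocks_def
    by (intro anchored_append[OF t_part] anchored_append) (simp_all add: fst_word_pow_blocks snd_word_pow_blocks)
qed

lemma async_fellow_travel_t_step:
  assumes d: "d \<in> {1, -1}" and v: "reduced (c0, r)" and ok: "b_letters_of k (c0, r)"
  shows "async_fellow_travel k ns (5 * real_of_int (b_bound k ns) + 8)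
    (nf_word (m, c0, r)) (nf_word (m - d, twist ns d (c0, r)))"
proof -
  let ?D = "nat (2 * b_bound k ns) + 1"
  have "async_fellow_travel k ns (1 + real_of_int (b_bound k ns) + 2 * real ?D + 1 + 4)
      (fst_word (t_step_blocks ns d m c0 r)) (snd_word (t_step_blocks ns d m c0 r))"
    by (rule async_fellow_travel_blocks[OF anchored_t_step_blocks[OF d v ok] blocks_over_t_step_blocks[OF ok]])
      (use length_t_step_blocks[OF d ok] in blast)
  moreover have "1 + real_of_int (b_bound k ns) + 2 * real ?D + 1 + 4 = 5 * real_of_int (b_bound k ns) + 8"
    using b_bound_nonneg[of k ns] by simp
  ultimately show ?thesis by (simp add: words_t_step_blocks add.commute)
qed

lemma async_fellow_travel_mono: "async_fellow_travel k ns K w u \<Longrightarrow> K \<le> K' \<Longrightarrow> async_fellow_travel k ns K' w u"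
  unfolding async_fellow_travel_def by (meson order_trans)

definition diag_blocks :: "letter list \<Rightarrow> block list" where "diag_blocks w = map (\<lambda>y. ([y], [y])) w"

lemma fst_word_diag_blocks: "fst_word (diag_blocks w) = w" and snd_word_diag_blocks: "snd_word (diag_blocks w) = w"
  by (induction w) (auto simp: diag_blocks_def)

lemma blocks_over_diag_blocks: "w \<in> lists (alphabet k) \<Longrightarrow> blocks_over k (diag_blocks w)"
  by (auto simp: blocks_over_def diag_blocks_def)

lemma anchored_diag_blocks: "0 \<le> C \<Longrightarrow> anchored k ns C P P (diag_blocks w)"
proof -
  assume C: "0 \<le> C"
  have "fst_word (take i (diag_blocks w)) = snd_word (take i (diag_blocks w))" for i
  proof -
    have "take i (diag_blocks w) = diag_blocks (take i w)" by (simp add: diag_blocks_def take_map)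
    then show ?thesis by (simp only: fst_word_diag_blocks snd_word_diag_blocks)
  qed
  then show ?thesis unfolding anchored_def using dword_self C by simp
qed

lemma length_diag_blocks: "b \<in> set (diag_blocks w) \<Longrightarrow> length (fst b) \<le> 1 \<and> length (snd b) \<le> 1"
  by (auto simp: diag_blocks_def)

lemma async_fellow_travel_common_prefix:
  assumes w: "w \<in> lists (alphabet k)"
    and y: "y \<in> lists (alphabet k)" "length y \<le> 1" and z: "z \<in> lists (alphabet k)" "length z \<le> 1"
  shows "async_fellow_travel k ns 9 (w @ y) (w @ z)"
proof -
  let ?bs = "diag_blocks w @ [(y, z)]"
  have "dword k ns (w @ y) (w @ z) \<le> dword k ns (w @ y) w + dword k ns w (w @ z)"
    by (rule dword_triangle) (use w y z in auto)
  also have "\<dots> \<le> 2" using dword_append_le'[OF y(1), of ns w] dword_append_le[OF z(1), of ns w] y z by simp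
  finally have an: "anchored k ns 2 [] [] ?bs"
    by (intro anchored_append[OF anchored_diag_blocks])
      (simp_all add: fst_word_diag_blocks snd_word_diag_blocks anchored_Cons anchored_Nil dword_self)
  have ok: "blocks_over k ?bs" using blocks_over_diag_blocks[OF w] y z by (simp add: blocks_over_append blocks_over_def)
  have D: "\<forall>b\<in>set ?bs. length (fst b) \<le> 1 \<and> length (snd b) \<le> 1" using length_diag_blocks y z by auto
  have "async_fellow_travel k ns (2 + 2 * real 1 + 1 + 4) (fst_word ?bs) (snd_word ?bs)"
    by (rule async_fellow_travel_blocks[OF an ok D])
  then show ?thesis by (simp add: fst_word_diag_blocks snd_word_diag_blocks)
qed

lemma letter_code_bound: "x \<in> alphabet k \<Longrightarrow> letter_code x \<le> 2 * k + 5"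
  by (cases x) (auto simp: alphabet_def gens_def letter_code_def)

lemma nf_dfa_in: "q < 2 * k + 8 \<Longrightarrow> x \<in> alphabet k \<Longrightarrow> nf_dfa q x < 2 * k + 8"
  using letter_code_bound[of x k] by (auto simp: nf_dfa_def)

lemma foldl_nf_dfa_in: "q < 2 * k + 8 \<Longrightarrow> w \<in> lists (alphabet k) \<Longrightarrow> foldl nf_dfa q w < 2 * k + 8"
  by (induction w arbitrary: q) (auto simp: nf_dfa_in)

lemma syllables_in_lists: "\<forall>x\<in>set r. fst x \<in> alphabet k \<Longrightarrow> (\<And>c. gpow Ga c \<in> lists (alphabet k)) \<Longrightarrow>
  concat (map (\<lambda>x. fst x # gpow Ga (snd x)) r) \<in> lists (alphabet k)"
  by (induction r) auto

lemma nf_word_in_lists: "b_letters_of k p \<Longrightarrow> nf_word (m, p) \<in> lists (alphabet k)"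
proof -
  assume ok: "b_letters_of k p"
  have "\<forall>x\<in>set (snd p). fst x \<in> alphabet k" using ok b_letter_of_in_lists by (auto simp: b_letters_of_def)
  moreover have "gpow Ga c \<in> lists (alphabet k)" for c using gpow_in_lists[of Ga k] by simp
  ultimately have "concat (map (\<lambda>x. fst x # gpow Ga (snd x)) (snd p)) \<in> lists (alphabet k)"
    using syllables_in_lists by blast
  then show ?thesis using gpow_in_lists[of Gt k] gpow_in_lists[of Ga k]
    by (auto simp: nf_word_def syls_word_def)
qed

definition nf_language :: "nat \<Rightarrow> letter list set" where
  "nf_language k = {w \<in> lists (alphabet k). nf_accepts w}"

lemma regular_nf_language: "regular_lang (alphabet k) (nf_language k)"
  unfolding regular_lang_def
proof (intro conjI exI)
  let ?Q = "{..<2 * k + 8}"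
  show "nf_language k \<subseteq> lists (alphabet k)" by (auto simp: nf_language_def)
  show "\<forall>q\<in>?Q. \<forall>x\<in>alphabet k. nf_dfa q x \<in> ?Q" using nf_dfa_in by auto
  show "nf_language k = {w \<in> lists (alphabet k). foldl nf_dfa 0 w \<in> ?Q - {1}}"
    using foldl_nf_dfa_in[of 0 k] by (auto simp: nf_language_def nf_accepts_def)
qed auto

lemma nf_word_nf_run_in_nf_language:
  assumes "v \<in> lists (alphabet k)"
  shows "nf_word (nf_run ns (0, 0, []) v) \<in> nf_language k"
proof -
  obtain m c0 r where e: "nf_run ns (0, 0, []) v = (m, c0, r)" by (cases "nf_run ns (0, 0, []) v") auto
  have "reduced (c0, r)" "b_letters_of k (c0, r)" using nf_run_invariants[OF assms, of ns] e by auto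
  then show ?thesis
    using nf_accepts_nf_word nf_word_in_lists e by (simp add: nf_language_def)
qed

lemma nf_language_nf_run:
  "w \<in> nf_language k \<Longrightarrow> w = nf_word (nf_run ns (0, 0, []) w)"
  by (auto simp: nf_language_def intro: nf_word_nf_run_if_nf_accepts)

lemma nf_language_unique:
  assumes "w \<in> nf_language k" "u \<in> nf_language k" "eqG k ns u w"
  shows "u = w"
  using nf_language_nf_run[OF assms(1), of ns] nf_language_nf_run[OF assms(2), of ns]
    nf_run_eqG[OF assms(3), of "(0, 0, [])"] by (simp add: reduced_def)

text \<open>Unless x is a t-letter, either w x is itself a normal form or x cancels the last letter of w.\<close>
lemma async_fellow_travel_nf_language_step:
  assumes wL: "w \<in> nf_language k" and uL: "u \<in> nf_language k" and x: "x \<in> alphabet k"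
    and eq: "eqG k ns u (w @ [x])"
  shows "async_fellow_travel k ns (5 * real_of_int (b_bound k ns) + 9) w u"
proof -
  let ?K = "5 * real_of_int (b_bound k ns) + 9"
  let ?ev = "nf_run ns (0, 0, [])"
  have K9: "9 \<le> ?K" using b_bound_nonneg[of k ns] by simp
  have wl: "w \<in> lists (alphabet k)" and aw: "nf_accepts w" using wL by (auto simp: nf_language_def)
  have wn: "w = nf_word (?ev w)" and un: "u = nf_word (?ev u)"
    using nf_language_nf_run wL uL by auto
  obtain m c0 r where e: "?ev w = (m, c0, r)" by (cases "?ev w") auto
  have vi: "reduced (c0, r)" "b_letters_of k (c0, r)" using nf_run_invariants[OF wl, of ns] e by auto
  have eu: "?ev u = nf_step ns (m, c0, r) x"
    using nf_run_eqG[OF eq, of "(0, 0, [])"] e by (simp add: reduced_def)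
  show ?thesis
  proof (cases "fst x = Gt")
    case True
    define d where "d = (if snd x then (1::int) else -1)"
    have d: "d \<in> {1, -1}" by (simp add: d_def)
    have "x = t_letter d" using True by (cases x) (auto simp: d_def)
    then have "u = nf_word (m - d, twist ns d (c0, r))" using un eu nf_step_t_letter[OF d] by simp
    then show ?thesis
      using async_fellow_travel_mono[OF async_fellow_travel_t_step[OF d vi]] wn e by simp
  next
    case nt: False
    show ?thesis
    proof (cases "may_follow_opt (last_opt w) x")
      case True
      have "last_opt w = nf_last_letter (m, c0, r)" using wn e last_nf_word[of m c0 r] by simp
      then have "u = w @ [x]" using nf_word_step_snoc[OF vi(1)] True un eu wn e by simp
      moreover have "async_fellow_travel k ns 9 (w @ []) (w @ [x])"
        by (rule async_fellow_travel_common_prefix) (use wl x in auto)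
      ultimately show ?thesis using async_fellow_travel_mono K9 by fastforce
    next
      case False
      then have wne: "w \<noteq> []" by (auto simp: last_opt_def)
      then have lx: "x = inv_letter (last w)" using False nt by (auto simp: last_opt_def may_follow_def)
      define w0 where "w0 = butlast w"
      have w0: "w = w0 @ [inv_letter x]" using wne lx by (simp add: w0_def)
      have w0l: "w0 \<in> lists (alphabet k)" using wl w0 by (metis append_in_lists_conv)
      have "nf_accepts w0" using aw w0 nf_accepts_snoc by metis
      then have w0L: "w0 \<in> nf_language k" using w0l by (simp add: nf_language_def)
      have "nf_step ns (?ev w) x = ?ev w0"
        using w0 nf_step_inv[of "?ev w0" ns "inv_letter x"] nf_run_invariants[OF w0l, of ns] by simp
      then have "u = w0" using un eu e nf_language_nf_run[OF w0L, of ns] by simp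
      moreover have "async_fellow_travel k ns 9 (w0 @ [inv_letter x]) (w0 @ [])"
        by (rule async_fellow_travel_common_prefix) (use w0l inv_letter_in_lists[OF x] in auto)
      ultimately show ?thesis using async_fellow_travel_mono K9 w0 by fastforce
    qed
  qed
qed

text \<open>The argument does not use the hypothesis k \<ge> 1.\<close>
theorem mainTheorem1:
  fixes k :: nat and ns :: "nat \<Rightarrow> int"
  assumes "k \<ge> 1"
  shows "async_automatic k ns"
  unfolding async_automatic_def
proof (intro exI conjI ballI impI)
  let ?L = "nf_language k"
  show "regular_lang (alphabet k) ?L" by (rule regular_nf_language)
  fix v assume v: "v \<in> lists (alphabet k)"
  show "\<exists>w\<in>?L. eqG k ns w v"
    using nf_word_nf_run_in_nf_language[OF v] eqG.sym[OF eqG_nf_word_nf_run[OF v]] by blast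
  have "{w \<in> ?L. eqG k ns w v} \<subseteq> {nf_word (nf_run ns (0, 0, []) v)}"
    using nf_language_unique[OF _ nf_word_nf_run_in_nf_language[OF v]] eqG_nf_word_nf_run[OF v]
    by (blast intro: eqG.trans eqG.sym)
  then show "finite {w \<in> ?L. eqG k ns w v}" by (rule finite_subset) simp
next
  fix w u x assume wL: "w \<in> nf_language k" and uL: "u \<in> nf_language k" and x: "x \<in> alphabet k"
  show "eqG k ns u (w @ [x]) \<Longrightarrow> async_fellow_travel k ns (5 * real_of_int (b_bound k ns) + 9) w u"
    by (rule async_fellow_travel_nf_language_step[OF wL uL x])
  assume "eqG k ns u w"
  then have "u = w" by (rule nf_language_unique[OF wL uL])
  moreover have "async_fellow_travel k ns 9 (w @ []) (w @ [])"
    by (rule async_fellow_travel_common_prefix) (use wL in \<open>auto simp: nf_language_def\<close>)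
  ultimately show "async_fellow_travel k ns (5 * real_of_int (b_bound k ns) + 9) w u"
    using async_fellow_travel_mono b_bound_nonneg[of k ns] by fastforce
qed

end
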